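(* Suppose (A.1) and (A.2) hold, $k_n\to\infty$, $\log(k_n)/\log(n)\to0$ and $k_n^{1/2}b(\log(n/k_n))\to\lambda\in\mathbb{R}$. (i) Suppose $b$ is ultimately non-positive and let $\alpha=-4\lim_{n\to\infty}b(\log n)\,k_n/\log k_n\in[0,+\infty]$ (assumed to exist). If $\alpha>\theta$, then for $n$ large enough $AMSE(\hat\theta_n^{(2)})<AMSE(\hat\theta_n^{(1)})<AMSE(\hat\theta_n^{(3)})$. If $\alpha<\theta$, then for $n$ large enough $AMSE(\hat\theta_n^{(1)})<\min(AMSE(\hat\theta_n^{(2)}),AMSE(\hat\theta_n^{(3)}))$. (ii) Suppose $b$ is ultimately non-negative and let $\beta=2\lim_{x\to\infty}x\,b(x)\in[0,+\infty]$ (assumed to exist). If $\beta>\theta$, then for $n$ large enough $AMSE(\hat\theta_n^{(3)})<AMSE(\hat\theta_n^{(1)})<AMSE(\hat\theta_n^{(2)})$. If $\beta<\theta$, then for $n$ large enough $AMSE(\hat\theta_n^{(1)})<\min(AMSE(\hat\theta_n^{(2)}),AMSE(\hat\theta_n^{(3)}))$.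
   Context: Let $X_1,\dots,X_n$ be i.i.d. with cdf $F$, order statistics $X_{1,n}\le\dots\le X_{n,n}$, and $1\le k_n<n$. Assumption (A.1): there is $\theta>0$ such that $1-F(x)=\exp(-H(x))$ for $x\ge x_0\ge0$, and $H^{\leftarrow}(t)=\inf\{x:H(x)\ge t\}=t^\theta\ell(t)$ with $\ell$ slowly varying at infinity. Assumption (A.2): there exist $\rho\le0$ and $b$ with $b(x)\to0$ such that, uniformly locally on $\lambda\ge1$, $\log(\ell(\lambda x)/\ell(x))\sim b(x)K_\rho(\lambda)$ as $x\to\infty$, where $K_\rho(\lambda)=\int_1^\lambda u^{\rho-1}du$ (so $|b|$ is regularly varying with index $\rho$). Let $\mu_0(t)=\int_0^\infty\log(1+x/t)e^{-x}dx$, $T_n^{(1)}=\mu_0(\log(n/k_n))$, $T_n^{(2)}=\frac1{k_n}\sum_{i=1}^{k_n}\log\left(1-\frac{\log(i/k_n)}{\log(n/k_n)}\right)$, $T_n^{(3)}=1/\log(n/k_n)$, $\hat\theta_n^{(i)}=\frac{1}{T_n^{(i)}}\frac1{k_n}\sum_{j=1}^{k_n}(\log X_{n-j+1,n}-\log X_{n-k_n+1,n})$, and $a_n^{(i)}=\mu_0(\log(n/k_n))/T_n^{(i)}-1$. The asymptotic mean square error is defined by $AMSE(\hat\theta_n^{(i)})=(\theta a_n^{(i)}+b(\log(n/k_n)))^2+\theta^2/k_n$. *)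

theory Defs
  imports "HOL-Analysis.Analysis"
begin

definition is_cdf :: "(real \<Rightarrow> real) \<Rightarrow> bool" where
  "is_cdf F \<longleftrightarrow> mono F \<and> (\<forall>x. continuous (at_right x) F)
     \<and> (F \<longlongrightarrow> 0) at_bot \<and> (F \<longlongrightarrow> 1) at_top"

definition slowly_varying :: "(real \<Rightarrow> real) \<Rightarrow> bool" where
  "slowly_varying L \<longleftrightarrow> (\<forall>\<^sub>F x in at_top. L x > 0)
     \<and> (\<forall>c>0. ((\<lambda>x. L (c * x) / L x) \<longlongrightarrow> 1) at_top)"

definition gen_inv :: "real \<Rightarrow> (real \<Rightarrow> real) \<Rightarrow> real \<Rightarrow> real" where
  "gen_inv x0 H t = Inf {x. x0 \<le> x \<and> t \<le> H x}"

definition K_fun :: "real \<Rightarrow> real \<Rightarrow> real" where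
  "K_fun \<rho> lam = integral {1..lam} (\<lambda>u. u powr (\<rho> - 1))"

definition assm_A1 :: "(real \<Rightarrow> real) \<Rightarrow> real \<Rightarrow> (real \<Rightarrow> real) \<Rightarrow> real \<Rightarrow> (real \<Rightarrow> real) \<Rightarrow> bool" where
  "assm_A1 F \<theta> H x0 ell \<longleftrightarrow> \<theta> > 0 \<and> x0 \<ge> 0
     \<and> (\<forall>x\<ge>x0. 1 - F x = exp (- H x))
     \<and> (\<forall>\<^sub>F t in at_top. gen_inv x0 H t = t powr \<theta> * ell t)
     \<and> slowly_varying ell"

definition assm_A2 :: "(real \<Rightarrow> real) \<Rightarrow> real \<Rightarrow> (real \<Rightarrow> real) \<Rightarrow> bool" where
  "assm_A2 ell \<rho> b \<longleftrightarrow> \<rho> \<le> 0 \<and> (b \<longlongrightarrow> 0) at_top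
     \<and> (\<forall>\<^sub>F x in at_top. b x \<noteq> 0)
     \<and> (\<forall>\<Lambda>\<ge>1. \<forall>\<epsilon>>0. \<forall>\<^sub>F x in at_top. \<forall>lam\<in>{1..\<Lambda>}.
          \<bar>ln (ell (lam * x) / ell x) - b x * K_fun \<rho> lam\<bar> \<le> \<epsilon> * \<bar>b x * K_fun \<rho> lam\<bar>)"

definition mu0 :: "real \<Rightarrow> real" where
  "mu0 t = (LBINT x:{0..}. ln (1 + x / t) * exp (- x))"

definition T1 :: "nat \<Rightarrow> nat \<Rightarrow> real" where
  "T1 n k = mu0 (ln (real n / real k))"

definition T2 :: "nat \<Rightarrow> nat \<Rightarrow> real" where
  "T2 n k = (1 / real k) * (\<Sum>i=1..k. ln (1 - ln (real i / real k) / ln (real n / real k)))"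

definition T3 :: "nat \<Rightarrow> nat \<Rightarrow> real" where
  "T3 n k = 1 / ln (real n / real k)"

definition a_n :: "(nat \<Rightarrow> nat \<Rightarrow> real) \<Rightarrow> nat \<Rightarrow> nat \<Rightarrow> real" where
  "a_n T n k = mu0 (ln (real n / real k)) / T n k - 1"

definition AMSE :: "(nat \<Rightarrow> nat \<Rightarrow> real) \<Rightarrow> real \<Rightarrow> (real \<Rightarrow> real) \<Rightarrow> nat \<Rightarrow> nat \<Rightarrow> real" where
  "AMSE T \<theta> b n k = (\<theta> * a_n T n k + b (ln (real n / real k)))\<^sup>2 + \<theta>\<^sup>2 / real k"

end

theory Submission
  imports Defs "HOL-Probability.Sinc_Integral" "HOL-Real_Asymp.Real_Asymp"
begin

(* Write t = ln (n/k).  With a_n T = mu0 t / T - 1 and B = b(t), one has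
     AMSE T - AMSE T1 = theta a_n T (theta a_n T + 2 B)   whenever a_n T1 = 0,
   so every comparison with T1 is a question of signs. *)

(* Second and third order Taylor bounds for ln (1 + y), y >= 0: they turn integrals of
   ln (1 + x/t) against exp(-x) into moments of the exponential law. *)
lemma ln_one_plus_ge_quadratic:
  fixes y :: real assumes "0 \<le> y" shows "y - y\<^sup>2 / 2 \<le> ln (1 + y)"
proof -
  let ?p = "\<lambda>z::real. ln (1 + z) - z + z\<^sup>2 / 2"
  have "?p 0 \<le> ?p y"
  proof (rule DERIV_nonneg_imp_nondecreasing[OF assms])
    fix z :: real assume z: "0 \<le> z" "z \<le> y"
    have "(?p has_real_derivative (1 / (1 + z) - 1 + z)) (at z)"
      using z by (auto intro!: derivative_eq_intros)
    moreover have "1 / (1 + z) - 1 + z \<ge> 0" using z by (simp add: field_simps)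
    ultimately show "\<exists>d. (?p has_real_derivative d) (at z) \<and> 0 \<le> d" by blast
  qed
  then show ?thesis by simp
qed

lemma ln_one_plus_le_cubic:
  fixes y :: real assumes "0 \<le> y" shows "ln (1 + y) \<le> y - y\<^sup>2 / 2 + y ^ 3 / 3"
proof -
  let ?p = "\<lambda>z::real. z - z\<^sup>2 / 2 + z ^ 3 / 3 - ln (1 + z)"
  have "?p 0 \<le> ?p y"
  proof (rule DERIV_nonneg_imp_nondecreasing[OF assms])
    fix z :: real assume z: "0 \<le> z" "z \<le> y"
    have "(?p has_real_derivative (1 - z + z\<^sup>2 - 1 / (1 + z))) (at z)"
      using z by (auto intro!: derivative_eq_intros simp: power2_eq_square)
    moreover have "1 - z + z\<^sup>2 - 1 / (1 + z) \<ge> 0"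
      using z by (simp add: field_simps power2_eq_square)
    ultimately show "\<exists>d. (?p has_real_derivative d) (at z) \<and> 0 \<le> d" by blast
  qed
  then show ?thesis by simp
qed

lemma has_bochner_integral_atLeast_FTC:
  fixes \<phi> \<Phi> :: "real \<Rightarrow> real"
  assumes meas: "\<phi> \<in> borel_measurable borel"
    and der: "\<And>x. a \<le> x \<Longrightarrow> (\<Phi> has_real_derivative \<phi> x) (at x)"
    and nonneg: "\<And>x. a \<le> x \<Longrightarrow> 0 \<le> \<phi> x"
    and lim: "(\<Phi> \<longlongrightarrow> T) at_top"
  shows "has_bochner_integral lborel (\<lambda>x. indicator {a..} x * \<phi> x) (T - \<Phi> a)"
proof (rule has_bochner_integral_nn_integral)
  show "(\<lambda>x. indicator {a..} x * \<phi> x) \<in> borel_measurable lborel" using meas by measurable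
  show "AE x in lborel. 0 \<le> indicator {a..} x * \<phi> x"
    using nonneg by (auto split: split_indicator)
  have mono: "\<Phi> a \<le> \<Phi> x" if "a \<le> x" for x
    using that by (intro DERIV_nonneg_imp_nondecreasing[of a x \<Phi>]) (use der nonneg in auto)
  show "0 \<le> T - \<Phi> a"
    using tendsto_lowerbound[OF lim, of "\<Phi> a"] mono by (auto simp: eventually_at_top_linorder)
  have "(\<integral>\<^sup>+x. ennreal (\<phi> x) * indicator {a..} x \<partial>lborel) = T - \<Phi> a"
    by (rule nn_integral_FTC_atLeast[OF meas]) (use der nonneg lim in auto)
  moreover have "(\<integral>\<^sup>+x. ennreal (indicator {a..} x * \<phi> x) \<partial>lborel)
      = (\<integral>\<^sup>+x. ennreal (\<phi> x) * indicator {a..} x \<partial>lborel)"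
    by (intro nn_integral_cong) (auto split: split_indicator)
  ultimately show "(\<integral>\<^sup>+x. ennreal (indicator {a..} x * \<phi> x) \<partial>lborel) = ennreal (T - \<Phi> a)"
    by simp
qed

lemma exp_moment:
  "has_bochner_integral lborel (\<lambda>x. indicator {0..} x * (x ^ k * exp (- x))) (fact k :: real)"
  using has_bochner_integral_I0i_power_exp_m'[of k] by (simp add: mult_ac)

lemma exp_tail:
  fixes L :: real
  shows "has_bochner_integral lborel (\<lambda>x. indicator {L..} x * exp (- x)) (exp (- L))"
proof -
  have "has_bochner_integral lborel (\<lambda>x. indicator {L..} x * exp (- x)) (0 - (- exp (- L)))"
    by (rule has_bochner_integral_atLeast_FTC[where \<Phi>="\<lambda>x. - exp (- x)"])
       (auto intro!: derivative_eq_intros, real_asymp)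
  then show ?thesis by simp
qed

lemma linear_exp_tail:
  fixes L :: real
  shows "has_bochner_integral lborel (\<lambda>x. indicator {L..} x * ((x - L) * exp (- x))) (exp (- L))"
proof -
  have "has_bochner_integral lborel (\<lambda>x. indicator {L..} x * ((x - L) * exp (- x)))
      (0 - (- (L - L + 1) * exp (- L)))"
    by (rule has_bochner_integral_atLeast_FTC[where \<Phi>="\<lambda>x. - (x - L + 1) * exp (- x)"])
       (auto intro!: derivative_eq_intros simp: algebra_simps, real_asymp)
  then show ?thesis by simp
qed

definition mu0_integrand :: "real \<Rightarrow> real \<Rightarrow> real" where
  "mu0_integrand t x = ln (1 + x / t) * exp (- x)"

lemma mu0_as_integral: "mu0 t = integral\<^sup>L lborel (\<lambda>x. indicator {0..} x * mu0_integrand t x)"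
  unfolding mu0_def set_lebesgue_integral_def mu0_integrand_def by simp

lemma mu0_integrand_measurable [measurable]: "mu0_integrand t \<in> borel_measurable borel"
  unfolding mu0_integrand_def by measurable

lemma continuous_on_mu0_integrand:
  assumes "t > 0" "0 \<le> a" shows "continuous_on {a..b} (mu0_integrand t)"
proof -
  have "1 + x / t \<noteq> 0" if "a \<le> x" for x
    using that assms by (smt (verit) divide_nonneg_pos)
  then show ?thesis unfolding mu0_integrand_def using assms by (auto intro!: continuous_intros)
qed

(* Integrability, from the bound ln (1 + x/t) <= x/t and the first exponential moment;
   it persists on every Borel subset of [0, oo). *)
lemma integrable_mu0_integrand:
  assumes "t > 0"
  shows "integrable lborel (\<lambda>x. indicator {0..} x * mu0_integrand t x)"
proof (rule Bochner_Integration.integrable_bound)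
  show "integrable lborel (\<lambda>x. (1 / t) * (indicator {0..} x * (x ^ 1 * exp (- x))))"
    using exp_moment[of 1] by (intro integrable_mult_right) (auto simp: has_bochner_integral_iff)
  show "AE x in lborel. norm (indicator {0..} x * mu0_integrand t x)
      \<le> norm ((1 / t) * (indicator {0..} x * (x ^ 1 * exp (- x))))"
  proof (rule AE_I2)
    fix x :: real
    show "norm (indicator {0..} x * mu0_integrand t x)
        \<le> norm ((1 / t) * (indicator {0..} x * (x ^ 1 * exp (- x))))"
    proof (cases "0 \<le> x")
      case True
      have "ln (1 + x / t) \<le> x / t" using True assms by (intro ln_add_one_self_le_self) simp
      then have "ln (1 + x / t) * exp (- x) \<le> (x / t) * exp (- x)" by (intro mult_right_mono) auto
      then show ?thesis using True assms by (simp add: mu0_integrand_def abs_mult)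
    qed simp
  qed
qed simp

lemma integrable_mu0_integrand_on:
  assumes "t > 0" "A \<subseteq> {0..}" "A \<in> sets borel"
  shows "integrable lborel (\<lambda>x. indicator A x * mu0_integrand t x)"
proof (rule Bochner_Integration.integrable_bound[OF integrable_mu0_integrand[OF assms(1)]])
  show "AE x in lborel. norm (indicator A x * mu0_integrand t x)
      \<le> norm (indicator {0..} x * mu0_integrand t x)"
    using assms(2) by (intro AE_I2) (auto split: split_indicator)
qed (use assms(3) in measurable)

lemma mu0_ge_of_pointwise:
  assumes "t > 0" and g: "has_bochner_integral lborel (\<lambda>x. indicator {0..} x * g x) I"
    and le: "\<And>x. 0 \<le> x \<Longrightarrow> g x \<le> mu0_integrand t x"
  shows "I \<le> mu0 t"
  unfolding mu0_as_integral has_bochner_integral_integral_eq[OF g, symmetric]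
  using g le by (intro integral_mono integrable_mu0_integrand[OF assms(1)])
    (auto simp: has_bochner_integral_iff split: split_indicator)

lemma mu0_le_of_pointwise:
  assumes "t > 0" and g: "has_bochner_integral lborel (\<lambda>x. indicator {0..} x * g x) I"
    and le: "\<And>x. 0 \<le> x \<Longrightarrow> mu0_integrand t x \<le> g x"
  shows "mu0 t \<le> I"
  unfolding mu0_as_integral has_bochner_integral_integral_eq[OF g, symmetric]
  using g le by (intro integral_mono integrable_mu0_integrand[OF assms(1)])
    (auto simp: has_bochner_integral_iff split: split_indicator)

(* Integrating the Taylor bounds of ln (1 + x/t) against exp(-x) gives
   1/t - 1/t^2 <= mu0 t <= 1/t - 1/t^2 + 2/t^3. *)
lemma mu0_bounds:
  assumes t: "t > 0"
  shows "1 / t - 1 / t\<^sup>2 \<le> mu0 t" "mu0 t \<le> 1 / t - 1 / t\<^sup>2 + 2 / t ^ 3"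
proof -
  define m where "m j x = indicator {0..} x * (x ^ j * exp (- x))" for j and x :: real
  have "has_bochner_integral lborel (\<lambda>x. (1 / t) * m 1 x - (1 / (2 * t\<^sup>2)) * m 2 x)
      (1 / t * fact 1 - 1 / (2 * t\<^sup>2) * fact 2)"
    unfolding m_def by (intro has_bochner_integral_diff has_bochner_integral_mult_right exp_moment)
  then have "has_bochner_integral lborel
      (\<lambda>x. indicator {0..} x * ((x / t - (x / t)\<^sup>2 / 2) * exp (- x))) (1 / t - 1 / t\<^sup>2)"
    by (rule has_bochner_integral_cong[THEN iffD1, rotated 3])
      (auto simp: m_def power2_eq_square field_simps split: split_indicator)
  then show "1 / t - 1 / t\<^sup>2 \<le> mu0 t"
    using ln_one_plus_ge_quadratic t
    by (intro mu0_ge_of_pointwise) (auto simp: mu0_integrand_def intro!: mult_right_mono)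
  have "has_bochner_integral lborel
      (\<lambda>x. (1 / t) * m 1 x - (1 / (2 * t\<^sup>2)) * m 2 x + (1 / (3 * t ^ 3)) * m 3 x)
      (1 / t * fact 1 - 1 / (2 * t\<^sup>2) * fact 2 + 1 / (3 * t ^ 3) * fact 3)"
    unfolding m_def
    by (intro has_bochner_integral_add has_bochner_integral_diff has_bochner_integral_mult_right
        exp_moment)
  then have "has_bochner_integral lborel
      (\<lambda>x. indicator {0..} x * ((x / t - (x / t)\<^sup>2 / 2 + (x / t) ^ 3 / 3) * exp (- x)))
      (1 / t - 1 / t\<^sup>2 + 2 / t ^ 3)"
    by (rule has_bochner_integral_cong[THEN iffD1, rotated 3])
      (auto simp: m_def power2_eq_square power3_eq_cube fact_numeral field_simps
        split: split_indicator)
  then show "mu0 t \<le> 1 / t - 1 / t\<^sup>2 + 2 / t ^ 3"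
    using ln_one_plus_le_cubic t
    by (intro mu0_le_of_pointwise) (auto simp: mu0_integrand_def intro!: mult_right_mono)
qed

(* Consequently mu0 t = 1/t - 1/t^2 + O(1/t^3): the second order term is exactly -1/t^2. *)
lemma mu0_second_order:
  assumes t: "t > 2"
  shows "-1 \<le> t * (t * mu0 t - 1)" "t * (t * mu0 t - 1) \<le> -1 + 2 / t" "mu0 t > 0"
proof -
  have t0: "t > 0" using t by simp
  have eq: "t * (t * mu0 t - 1) = t\<^sup>2 * mu0 t - t" by (simp add: algebra_simps power2_eq_square)
  have "t\<^sup>2 * (1 / t - 1 / t\<^sup>2) \<le> t\<^sup>2 * mu0 t" using mu0_bounds(1)[OF t0] by (intro mult_left_mono) auto
  moreover have "t\<^sup>2 * (1 / t - 1 / t\<^sup>2) = t - 1" using t0 by (simp add: field_simps power2_eq_square)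
  ultimately show "-1 \<le> t * (t * mu0 t - 1)" using eq by simp
  have "t\<^sup>2 * mu0 t \<le> t\<^sup>2 * (1 / t - 1 / t\<^sup>2 + 2 / t ^ 3)"
    using mu0_bounds(2)[OF t0] by (intro mult_left_mono) auto
  moreover have "t\<^sup>2 * (1 / t - 1 / t\<^sup>2 + 2 / t ^ 3) = t - 1 + 2 / t"
    using t0 by (simp add: field_simps power2_eq_square power3_eq_cube)
  ultimately show "t * (t * mu0 t - 1) \<le> -1 + 2 / t" using eq by simp
  have "1 / t\<^sup>2 < 1 / t" using t by (simp add: power2_eq_square divide_strict_left_mono)
  then show "mu0 t > 0" using mu0_bounds(1)[OF t0] by simp
qed

(* The function u \<mapsto> ln (1 - ln u / t) on (0, 1]: T2 is its Riemann sum over the points i/k,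
   and the substitution u = exp(-x) turns mu0 t into its integral over (0, 1]. *)
definition sum_kernel :: "real \<Rightarrow> real \<Rightarrow> real" where
  "sum_kernel t u = ln (1 - ln u / t)"

lemma T2_as_kernel_sum:
  "T2 n k = (1 / real k) * (\<Sum>i=1..k. sum_kernel (ln (real n / real k)) (real i / real k))"
  unfolding T2_def sum_kernel_def ..

lemma mu0_integrand_as_kernel: "mu0_integrand t x = sum_kernel t (exp (- x)) * exp (- x)"
  unfolding mu0_integrand_def sum_kernel_def by simp

definition sum_kernel_deriv :: "real \<Rightarrow> real \<Rightarrow> real" where
  "sum_kernel_deriv t u = - 1 / (u * (t - ln u))"

definition sum_kernel_deriv2 :: "real \<Rightarrow> real \<Rightarrow> real" where
  "sum_kernel_deriv2 t u = (t - ln u - 1) / (u\<^sup>2 * (t - ln u)\<^sup>2)"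

(* On (0, e] one has t - ln u > 0 for t >= 2, so the kernel is smooth there. *)
lemma ln_le_one_of_le_exp1: "0 < (u::real) \<Longrightarrow> u \<le> exp 1 \<Longrightarrow> ln u \<le> 1"
  using ln_le_cancel_iff[of u "exp 1"] by simp

lemma sum_kernel_has_deriv:
  assumes "t \<ge> 2" "0 < u" "u \<le> exp 1"
  shows "(sum_kernel t has_real_derivative sum_kernel_deriv t u) (at u)"
proof -
  have pos: "t - ln u > 0" using ln_le_one_of_le_exp1[OF assms(2,3)] assms(1) by simp
  then have "1 - ln u / t > 0" using assms by (simp add: field_simps)
  then show ?thesis unfolding sum_kernel_def sum_kernel_deriv_def
    using assms pos by (auto intro!: derivative_eq_intros simp: field_simps)
qed

lemma sum_kernel_deriv_has_deriv:
  assumes "t \<ge> 2" "0 < u" "u \<le> exp 1"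
  shows "(sum_kernel_deriv t has_real_derivative sum_kernel_deriv2 t u) (at u)"
proof -
  have pos: "t - ln u > 0" using ln_le_one_of_le_exp1[OF assms(2,3)] assms(1) by simp
  have "((\<lambda>u. - 1 / (u * (t - ln u))) has_real_derivative
      - ((1 * (t - ln u) + u * (0 - 1 / u)) / (u * (t - ln u))\<^sup>2 * (-1))) (at u)"
    using assms pos
    by (intro derivative_eq_intros DERIV_divide[where f="\<lambda>_. -1", THEN DERIV_cong])
      (auto simp: power2_eq_square)
  moreover have "- ((1 * (t - ln u) + u * (0 - 1 / u)) / (u * (t - ln u))\<^sup>2 * (-1))
      = sum_kernel_deriv2 t u"
  proof -
    have "u * (0 - 1 / u) = -1" using assms by simp
    then show ?thesis unfolding sum_kernel_deriv2_def by (simp add: power_mult_distrib)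
  qed
  ultimately show ?thesis unfolding sum_kernel_deriv_def by simp
qed

lemma sum_kernel_deriv2_nonneg:
  assumes "t \<ge> 2" "0 < u" "u \<le> exp 1"
  shows "sum_kernel_deriv2 t u \<ge> 0"
  using ln_le_one_of_le_exp1[OF assms(2,3)] assms unfolding sum_kernel_deriv2_def
  by (intro divide_nonneg_pos) auto

(* Convexity of the kernel on (0, e] is what makes the Riemann sum T2 comparable to mu0:
   tangents and midpoints bound the cell integrals from below, chords from above. *)
lemma sum_kernel_convex: "t \<ge> 2 \<Longrightarrow> convex_on {0<..exp 1} (sum_kernel t)"
  by (rule f''_ge0_imp_convex[where f'="sum_kernel_deriv t" and f''="sum_kernel_deriv2 t"])
     (use sum_kernel_has_deriv sum_kernel_deriv_has_deriv sum_kernel_deriv2_nonneg in auto)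

lemma sum_kernel_above_tangent:
  assumes "t \<ge> 2" "0 < m" "m \<le> exp 1" "0 < u" "u \<le> exp 1"
  shows "sum_kernel t m + sum_kernel_deriv t m * (u - m) \<le> sum_kernel t u"
  using f''_imp_f'[where C="{0<..exp 1}" and f="sum_kernel t" and f'="sum_kernel_deriv t"
      and f''="sum_kernel_deriv2 t" and x=m and y=u]
    assms sum_kernel_has_deriv sum_kernel_deriv_has_deriv sum_kernel_deriv2_nonneg by auto

lemma sum_kernel_below_chord:
  assumes "t \<ge> 2" "0 < p" "p < q" "q \<le> exp 1" "p \<le> u" "u \<le> q"
  shows "sum_kernel t u \<le> sum_kernel t p + (sum_kernel t q - sum_kernel t p) / (q - p) * (u - p)"
proof -
  define l where "l = (u - p) / (q - p)"
  have l: "0 \<le> l" "l \<le> 1" using assms by (auto simp: field_simps l_def)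
  have "l * (q - p) = u - p" using assms by (simp add: l_def)
  then have u: "u = (1 - l) * p + l * q" by (simp add: algebra_simps)
  have "sum_kernel t ((1 - l) * p + l * q) \<le> (1 - l) * sum_kernel t p + l * sum_kernel t q"
    using convex_onD[OF sum_kernel_convex[OF assms(1)], of l p q] l assms by auto
  then have "sum_kernel t u \<le> (1 - l) * sum_kernel t p + l * sum_kernel t q" using u by simp
  then have "sum_kernel t u \<le> sum_kernel t p + l * (sum_kernel t q - sum_kernel t p)"
    by (simp add: algebra_simps)
  then show ?thesis by (simp add: l_def mult.commute)
qed

lemma sum_kernel_midpoint:
  assumes "t \<ge> 2" "0 < p" "q \<le> exp 1" "p \<le> q"
  shows "sum_kernel t ((p + q) / 2) \<le> (sum_kernel t p + sum_kernel t q) / 2"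
  using convex_onD[OF sum_kernel_convex[OF assms(1)], of "1/2" p q] assms by (auto simp: field_simps)

(* After the substitution u = exp(-x), an affine function of u integrates exactly over a cell. *)
lemma affine_in_exp_integral:
  fixes c0 c1 p q :: real
  assumes "0 < p" "p < q"
  shows "((\<lambda>x. (c0 + c1 * exp (- x)) * exp (- x)) has_integral
      (c0 * (q - p) + c1 * (q\<^sup>2 - p\<^sup>2) / 2)) {- ln q..- ln p}"
proof -
  let ?F = "\<lambda>x::real. - c0 * exp (- x) - c1 * (exp (- x))\<^sup>2 / 2"
  have "((\<lambda>x. (c0 + c1 * exp (- x)) * exp (- x)) has_integral (?F (- ln p) - ?F (- ln q)))
      {- ln q..- ln p}"
  proof (rule fundamental_theorem_of_calculus)
    show "- ln q \<le> - ln p" using assms by simp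
    fix x assume "x \<in> {- ln q..- ln p}"
    show "(?F has_vector_derivative (c0 + c1 * exp (- x)) * exp (- x)) (at x within {- ln q..- ln p})"
      by (auto intro!: derivative_eq_intros
          simp: has_real_derivative_iff_has_vector_derivative[symmetric] power2_eq_square algebra_simps)
  qed
  moreover have "?F (- ln p) - ?F (- ln q) = c0 * (q - p) + c1 * (q\<^sup>2 - p\<^sup>2) / 2"
    using assms by (simp add: field_simps)
  ultimately show ?thesis by simp
qed

(* Bounds for the integral of mu0_integrand over the cell [-ln q, -ln p], 0 < p < q <= 1:
   below by the tangent at the midpoint, above by the chord (trapezoidal rule). *)
lemma cell_integral_bounds:
  assumes t: "t \<ge> 2" and pq: "0 < p" "p < q" "q \<le> 1"
  shows "(q - p) * sum_kernel t ((p + q) / 2) \<le> integral {- ln q..- ln p} (mu0_integrand t)"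
    "integral {- ln q..- ln p} (mu0_integrand t) \<le> (q - p) * (sum_kernel t p + sum_kernel t q) / 2"
proof -
  let ?f = "sum_kernel t"
  have e1: "1 \<le> exp (1::real)" by simp
  have int: "mu0_integrand t integrable_on {- ln q..- ln p}"
    using continuous_on_mu0_integrand[of t "- ln q" "- ln p"] t pq
    by (intro integrable_continuous_real) auto
  have in_cell: "p \<le> exp (- x) \<and> exp (- x) \<le> q" if "x \<in> {- ln q..- ln p}" for x
  proof -
    have "exp (- (- ln p)) \<le> exp (- x)" "exp (- x) \<le> exp (- (- ln q))" using that by auto
    then show ?thesis using pq by simp
  qed
  define m where "m = (p + q) / 2"
  have "0 < m" "m \<le> 1" using pq by (auto simp: m_def)
  then have m: "0 < m" "m \<le> exp 1" using e1 by linarith+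
  let ?c0 = "?f m - sum_kernel_deriv t m * m" and ?c1 = "sum_kernel_deriv t m"
  have "?c0 * (q - p) + ?c1 * (q\<^sup>2 - p\<^sup>2) / 2 = (q - p) * ?f m"
    by (simp add: m_def power2_eq_square algebra_simps)
  then have tangent: "((\<lambda>x. (?c0 + ?c1 * exp (- x)) * exp (- x)) has_integral ((q - p) * ?f m))
      {- ln q..- ln p}"
    using affine_in_exp_integral[of p q ?c0 ?c1] pq by simp
  have "(q - p) * ?f m \<le> integral {- ln q..- ln p} (mu0_integrand t)"
  proof (rule has_integral_le[OF tangent integrable_integral[OF int]])
    fix x assume x: "x \<in> {- ln q..- ln p}"
    have "exp (- x) \<le> exp 1" using in_cell[OF x] pq e1 by linarith
    then have "?f m + sum_kernel_deriv t m * (exp (- x) - m) \<le> ?f (exp (- x))"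
      by (intro sum_kernel_above_tangent t m) auto
    then have "(?f m + sum_kernel_deriv t m * (exp (- x) - m)) * exp (- x) \<le> ?f (exp (- x)) * exp (- x)"
      by (intro mult_right_mono) auto
    then show "(?c0 + ?c1 * exp (- x)) * exp (- x) \<le> mu0_integrand t x"
      by (simp add: mu0_integrand_as_kernel algebra_simps)
  qed
  then show "(q - p) * ?f ((p + q) / 2) \<le> integral {- ln q..- ln p} (mu0_integrand t)"
    by (simp add: m_def)
  define s where "s = (?f q - ?f p) / (q - p)"
  let ?d0 = "?f p - s * p"
  have hs: "s * (q - p) = ?f q - ?f p" using pq by (simp add: s_def)
  have "?d0 * (q - p) + s * (q\<^sup>2 - p\<^sup>2) / 2 = (q - p) * ?f p + (s * (q - p)) * (q - p) / 2"
    by (simp add: field_simps power2_eq_square)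
  also have "\<dots> = (q - p) * (?f p + ?f q) / 2" unfolding hs by (simp add: field_simps)
  finally have chord_value: "?d0 * (q - p) + s * (q\<^sup>2 - p\<^sup>2) / 2 = (q - p) * (?f p + ?f q) / 2" .
  have chord: "((\<lambda>x. (?d0 + s * exp (- x)) * exp (- x)) has_integral
      ((q - p) * (?f p + ?f q) / 2)) {- ln q..- ln p}"
    unfolding chord_value[symmetric] by (rule affine_in_exp_integral) (use pq in auto)
  show "integral {- ln q..- ln p} (mu0_integrand t) \<le> (q - p) * (?f p + ?f q) / 2"
  proof (rule has_integral_le[OF integrable_integral[OF int] chord])
    fix x assume x: "x \<in> {- ln q..- ln p}"
    have "?f (exp (- x)) \<le> ?f p + (?f q - ?f p) / (q - p) * (exp (- x) - p)"
      using in_cell[OF x] pq order_trans[OF pq(3) e1] by (intro sum_kernel_below_chord t) auto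
    then have "?f (exp (- x)) * exp (- x) \<le> (?f p + s * (exp (- x) - p)) * exp (- x)"
      by (intro mult_right_mono) (auto simp: s_def)
    then show "mu0_integrand t x \<le> (?d0 + s * exp (- x)) * exp (- x)"
      by (simp add: mu0_integrand_as_kernel algebra_simps)
  qed
qed

(* The cells [-ln ((j+1)/k), -ln (j/k)], 1 <= j < k, tile [0, ln k]. *)
definition cell_integral :: "real \<Rightarrow> nat \<Rightarrow> nat \<Rightarrow> real" where
  "cell_integral t k j = integral {- ln (real (Suc j) / real k)..- ln (real j / real k)} (mu0_integrand t)"

lemma integral_as_cell_sum:
  assumes t: "t > 0" and m: "1 \<le> m" "m \<le> k"
  shows "integral {- ln (real m / real k)..ln (real k)} (mu0_integrand t)
       = (\<Sum>j\<in>{1..<m}. cell_integral t k j)"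
  using m
proof (induction m rule: dec_induct)
  case base
  have "- ln (1 / real k) = ln (real k)" using m by (simp add: ln_div)
  then show ?case by simp
next
  case (step m)
  have km: "0 < real m" "real m < real (Suc m)" "real (Suc m) \<le> real k" using step by auto
  have "real m / real k \<ge> 1 / real k" using km by (simp add: divide_right_mono)
  then have "- ln (real m / real k) \<le> ln (real k)" using km by (simp add: ln_div)
  moreover have "- ln (real (Suc m) / real k) \<le> - ln (real m / real k)"
    using km by (simp add: divide_right_mono)
  moreover have "0 \<le> - ln (real (Suc m) / real k)" using km by simp
  ultimately have "cell_integral t k m + integral {- ln (real m / real k)..ln (real k)} (mu0_integrand t)
      = integral {- ln (real (Suc m) / real k)..ln (real k)} (mu0_integrand t)"
    unfolding cell_integral_def
    by (intro Henstock_Kurzweil_Integration.integral_combine integrable_continuous_real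
        continuous_on_mu0_integrand t)
  then show ?case using step by (simp add: add.commute)
qed

definition tail_integral :: "real \<Rightarrow> real \<Rightarrow> real" where
  "tail_integral t L = integral\<^sup>L lborel (\<lambda>x. indicator {L..} x * mu0_integrand t x)"

lemma mu0_split:
  assumes t: "t > 0" and L: "0 \<le> L"
  shows "mu0 t = integral {0..L} (mu0_integrand t) + tail_integral t L"
proof -
  have "mu0 t = integral\<^sup>L lborel (\<lambda>x. indicator {0..<L} x * mu0_integrand t x
      + indicator {L..} x * mu0_integrand t x)"
    unfolding mu0_as_integral using L
    by (intro Bochner_Integration.integral_cong) (auto split: split_indicator)
  also have "\<dots> = integral\<^sup>L lborel (\<lambda>x. indicator {0..<L} x * mu0_integrand t x) + tail_integral t L"
    unfolding tail_integral_def using t L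
    by (intro Bochner_Integration.integral_add integrable_mu0_integrand_on) auto
  also have "integral\<^sup>L lborel (\<lambda>x. indicator {0..<L} x * mu0_integrand t x)
      = integral\<^sup>L lborel (\<lambda>x. indicator {0..L} x * mu0_integrand t x)"
    using AE_lborel_singleton[of L]
    by (intro integral_cong_AE) (measurable, auto elim!: eventually_mono split: split_indicator)
  also have "\<dots> = integral {0..L} (mu0_integrand t)"
    using set_borel_integral_eq_integral(2)[OF borel_integrable_atLeastAtMost'
        [OF continuous_on_mu0_integrand[OF t order.refl]]]
    by (simp add: set_lebesgue_integral_def)
  finally show ?thesis .
qed

(* On [L, oo) one has ln (1 + L/t) <= ln (1 + x/t) <= ln (1 + L/t) + (x - L)/t. *)
lemma tail_integral_bounds:
  assumes t: "t > 0" and L: "0 \<le> L"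
  shows "ln (1 + L / t) * exp (- L) \<le> tail_integral t L"
    "tail_integral t L \<le> (ln (1 + L / t) + 1 / t) * exp (- L)"
proof -
  have int: "integrable lborel (\<lambda>x. indicator {L..} x * mu0_integrand t x)"
    using t L by (intro integrable_mu0_integrand_on) auto
  have lower: "has_bochner_integral lborel (\<lambda>x. ln (1 + L / t) * (indicator {L..} x * exp (- x)))
      (ln (1 + L / t) * exp (- L))"
    by (intro has_bochner_integral_mult_right exp_tail)
  show "ln (1 + L / t) * exp (- L) \<le> tail_integral t L"
    unfolding tail_integral_def has_bochner_integral_integral_eq[OF lower, symmetric]
  proof (rule integral_mono[OF _ int])
    show "integrable lborel (\<lambda>x. ln (1 + L / t) * (indicator {L..} x * exp (- x)))"
      using lower by (auto simp: has_bochner_integral_iff)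
    fix x :: real
    have "L \<le> x \<Longrightarrow> ln (1 + L / t) \<le> ln (1 + x / t)"
      using L t by (simp add: divide_right_mono add_pos_nonneg)
    then show "ln (1 + L / t) * (indicator {L..} x * exp (- x)) \<le> indicator {L..} x * mu0_integrand t x"
      by (auto simp: mu0_integrand_def split: split_indicator)
  qed
  have upper: "has_bochner_integral lborel (\<lambda>x. ln (1 + L / t) * (indicator {L..} x * exp (- x))
      + (1 / t) * (indicator {L..} x * ((x - L) * exp (- x))))
      (ln (1 + L / t) * exp (- L) + 1 / t * exp (- L))"
    by (intro has_bochner_integral_add has_bochner_integral_mult_right exp_tail linear_exp_tail)
  have "tail_integral t L \<le> ln (1 + L / t) * exp (- L) + 1 / t * exp (- L)"
    unfolding tail_integral_def has_bochner_integral_integral_eq[OF upper, symmetric]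
  proof (rule integral_mono[OF int])
    show "integrable lborel (\<lambda>x. ln (1 + L / t) * (indicator {L..} x * exp (- x))
        + (1 / t) * (indicator {L..} x * ((x - L) * exp (- x))))"
      using upper by (auto simp: has_bochner_integral_iff)
    fix x :: real
    have "ln (1 + x / t) \<le> ln (1 + L / t) + (x - L) / t" if x: "L \<le> x"
    proof -
      have b0: "0 < 1 + L / t" and a0: "0 < 1 + x / t" using L t x by (auto simp: add_pos_nonneg)
      have "ln ((1 + x / t) / (1 + L / t)) \<le> (1 + x / t) / (1 + L / t) - 1"
        using a0 b0 by (intro ln_le_minus_one) simp
      also have "\<dots> = ((1 + x / t) - (1 + L / t)) / (1 + L / t)"
        unfolding diff_divide_distrib[of "1 + x / t"] using b0 by simp
      also have "(1 + x / t) - (1 + L / t) = (x - L) / t" by (simp add: diff_divide_distrib)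
      also have "((x - L) / t) / (1 + L / t) \<le> ((x - L) / t) / 1"
        using b0 x t L by (intro divide_left_mono) auto
      finally show ?thesis using a0 b0 by (simp add: ln_div)
    qed
    then have "L \<le> x \<Longrightarrow> ln (1 + x / t) * exp (- x) \<le> (ln (1 + L / t) + (x - L) / t) * exp (- x)"
      by (intro mult_right_mono) auto
    then show "indicator {L..} x * mu0_integrand t x \<le> ln (1 + L / t) * (indicator {L..} x * exp (- x))
        + (1 / t) * (indicator {L..} x * ((x - L) * exp (- x)))"
      by (auto simp: mu0_integrand_def algebra_simps diff_divide_distrib split: split_indicator)
  qed
  then show "tail_integral t L \<le> (ln (1 + L / t) + 1 / t) * exp (- L)" by (simp add: algebra_simps)
qed

lemma mu0_minus_kernel_sum:
  assumes t: "t > 0" and k: "k \<ge> 1"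
  shows "mu0 t - (1 / real k) * (\<Sum>i=1..k. sum_kernel t (real i / real k))
    = (tail_integral t (ln (real k)) - sum_kernel t (1 / real k) / real k)
      + (\<Sum>j\<in>{1..<k}. cell_integral t k j - sum_kernel t (real (Suc j) / real k) / real k)"
proof -
  let ?f = "\<lambda>i. sum_kernel t (real i / real k)"
  have "(\<Sum>i=1..k. ?f i) = ?f 1 + (\<Sum>i=Suc 1..<Suc k. ?f i)"
    using k by (simp add: sum.atLeast_Suc_atMost atLeastLessThanSuc_atLeastAtMost)
  also have "(\<Sum>i=Suc 1..<Suc k. ?f i) = (\<Sum>j=1..<k. ?f (Suc j))"
    by (rule sum.shift_bounds_Suc_ivl)
  finally have sum: "(\<Sum>i=1..k. ?f i) = ?f 1 + (\<Sum>j=1..<k. ?f (Suc j))" .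
  have "mu0 t = (\<Sum>j\<in>{1..<k}. cell_integral t k j) + tail_integral t (ln (real k))"
    using mu0_split[OF t, of "ln (real k)"] integral_as_cell_sum[OF t k order.refl] k by simp
  then show ?thesis
    unfolding sum by (simp add: sum_subtractf sum_divide_distrib[symmetric] distrib_left)
qed

(* Trapezoidal rule on one cell, measured against the right endpoint value. *)
lemma cell_integral_upper:
  assumes t: "t \<ge> 2" and j: "1 \<le> j" "j < k"
  shows "cell_integral t k j - sum_kernel t (real (Suc j) / real k) / real k
    \<le> (sum_kernel t (real j / real k) - sum_kernel t (real (Suc j) / real k)) / (2 * real k)"
proof -
  let ?f = "\<lambda>j. sum_kernel t (real j / real k)"
  have k0: "real k > 0" using j by simp
  have "cell_integral t k j \<le> (real (Suc j) / real k - real j / real k) * (?f j + ?f (Suc j)) / 2"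
    unfolding cell_integral_def
    using j k0 by (intro cell_integral_bounds(2) t) (auto simp: divide_strict_right_mono)
  also have "\<dots> = ?f (Suc j) / real k + (?f j - ?f (Suc j)) / (2 * real k)"
    using k0 by (simp add: field_simps)
  finally show ?thesis by simp
qed

(* Midpoint rule on one cell, combined with midpoint convexity of the kernel. *)
lemma cell_integral_lower:
  assumes t: "t \<ge> 2" and j: "1 \<le> j" "j < k"
  defines "M \<equiv> \<lambda>j. sum_kernel t ((2 * real j + 1) / (2 * real k))"
  shows "(M j - M (Suc j)) / (2 * real k)
    \<le> cell_integral t k j - sum_kernel t (real (Suc j) / real k) / real k"
proof -
  let ?f = "\<lambda>j. sum_kernel t (real j / real k)"
  have k0: "real k > 0" using j by simp
  have mid: "(real j / real k + real (Suc j) / real k) / 2 = (2 * real j + 1) / (2 * real k)"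
    using k0 by (simp add: field_simps)
  have "(real (Suc j) / real k - real j / real k) * M j \<le> cell_integral t k j"
    unfolding cell_integral_def M_def mid[symmetric]
    using j k0 by (intro cell_integral_bounds(1) t) (auto simp: divide_strict_right_mono)
  then have lo: "M j / real k \<le> cell_integral t k j"
    by (simp add: diff_divide_distrib[symmetric])
  have "(2 * real (Suc j) + 1) / (2 * real k) \<le> 2" using j k0 by (simp add: field_simps)
  then have "(2 * real j + 1) / (2 * real k) > 0" "(2 * real (Suc j) + 1) / (2 * real k) \<le> exp 1"
    using k0 exp_ge_add_one_self[of 1] by auto
  then have "sum_kernel t (((2 * real j + 1) / (2 * real k) + (2 * real (Suc j) + 1) / (2 * real k)) / 2)
      \<le> (M j + M (Suc j)) / 2"
    unfolding M_def using k0 by (intro sum_kernel_midpoint t) (auto simp: divide_right_mono)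
  moreover have "((2 * real j + 1) / (2 * real k) + (2 * real (Suc j) + 1) / (2 * real k)) / 2
      = real (Suc j) / real k"
    using k0 by (simp add: field_simps)
  ultimately have "?f (Suc j) \<le> (M j + M (Suc j)) / 2" by (simp only:)
  then have "?f (Suc j) / real k \<le> (M j + M (Suc j)) / 2 / real k"
    using k0 by (intro divide_right_mono) auto
  moreover have "(M j - M (Suc j)) / (2 * real k) = M j / real k - (M j + M (Suc j)) / 2 / real k"
    using k0 by (simp add: field_simps)
  ultimately show ?thesis using lo by linarith
qed

(* Upper bound: the trapezoidal rule on each cell, telescoped, and the tail bound. *)
lemma mu0_minus_kernel_sum_upper:
  assumes t: "t \<ge> 2" and k: "k \<ge> 2"
  shows "mu0 t - (1 / real k) * (\<Sum>i=1..k. sum_kernel t (real i / real k))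
    \<le> ln (1 + ln (real k) / t) / (2 * real k) + 1 / (real k * t)"
proof -
  let ?f = "\<lambda>j. sum_kernel t (real j / real k)"
  have k0: "real k > 0" using k by simp
  have f1: "?f 1 = ln (1 + ln (real k) / t)" and fk: "?f k = 0"
    using k0 by (simp_all add: sum_kernel_def ln_div)
  have "(\<Sum>j\<in>{1..<k}. cell_integral t k j - ?f (Suc j) / real k)
      \<le> (\<Sum>j\<in>{1..<k}. ?f j - ?f (Suc j)) / (2 * real k)"
    unfolding sum_divide_distrib by (intro sum_mono cell_integral_upper t) auto
  also have "(\<Sum>j\<in>{1..<k}. ?f j - ?f (Suc j)) = ?f 1 - ?f k"
    using sum_Suc_diff'[of 1 k "\<lambda>j. - ?f j"] k by simp
  finally have cells: "(\<Sum>j\<in>{1..<k}. cell_integral t k j - ?f (Suc j) / real k)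
      \<le> ln (1 + ln (real k) / t) / (2 * real k)"
    using f1 fk by simp
  have "tail_integral t (ln (real k)) \<le> (ln (1 + ln (real k) / t) + 1 / t) / real k"
    using tail_integral_bounds(2)[of t "ln (real k)"] t k0 by (simp add: exp_minus inverse_eq_divide)
  then have "tail_integral t (ln (real k)) - ?f 1 / real k \<le> 1 / (real k * t)"
    using f1 k0 by (simp add: field_simps)
  then show ?thesis
    using mu0_minus_kernel_sum[of t k] cells t k by simp
qed

(* Lower bound: the midpoint rule on each cell together with midpoint convexity, telescoped. *)
lemma mu0_minus_kernel_sum_lower:
  assumes t: "t \<ge> 2" and k: "k \<ge> 2"
  shows "ln (1 + ln (2 * real k / 3) / t) / (2 * real k)
    \<le> mu0 t - (1 / real k) * (\<Sum>i=1..k. sum_kernel t (real i / real k))"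
proof -
  let ?f = "\<lambda>j. sum_kernel t (real j / real k)"
  define M where "M j = sum_kernel t ((2 * real j + 1) / (2 * real k))" for j
  have k0: "real k > 0" using k by simp
  have f1: "?f 1 = ln (1 + ln (real k) / t)" using k0 by (simp add: sum_kernel_def ln_div)
  have "(M 1 - M k) / (2 * real k) = (\<Sum>j\<in>{1..<k}. M j - M (Suc j)) / (2 * real k)"
    using sum_Suc_diff'[of 1 k "\<lambda>j. - M j"] k by simp
  also have "\<dots> \<le> (\<Sum>j\<in>{1..<k}. cell_integral t k j - ?f (Suc j) / real k)"
    unfolding sum_divide_distrib M_def by (intro sum_mono cell_integral_lower t) auto
  finally have cells: "(M 1 - M k) / (2 * real k)
      \<le> (\<Sum>j\<in>{1..<k}. cell_integral t k j - ?f (Suc j) / real k)" .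
  have Mk: "M k \<le> 0"
  proof -
    define u where "u = (2 * real k + 1) / (2 * real k)"
    have u: "1 \<le> u" "u \<le> 2" using k0 by (auto simp: u_def field_simps)
    have "ln u \<le> ln 2" using u by simp
    then have "ln u < 1" using ln_2_less_1 by linarith
    moreover have "0 \<le> ln u" using u by simp
    ultimately have "0 < 1 - ln u / t" "1 - ln u / t \<le> 1" using t by (auto simp: field_simps)
    then show ?thesis unfolding M_def sum_kernel_def u_def[symmetric] by simp
  qed
  have M1: "M 1 = ln (1 + ln (2 * real k / 3) / t)"
  proof -
    have "ln ((2 * real 1 + 1) / (2 * real k)) = - ln (2 * real k / 3)" using k0 by (simp add: ln_div)
    then show ?thesis unfolding M_def sum_kernel_def by simp
  qed
  have tail: "sum_kernel t (1 / real k) / real k \<le> tail_integral t (ln (real k))"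
    using tail_integral_bounds(1)[of t "ln (real k)"] t k0 f1
    by (simp add: exp_minus inverse_eq_divide)
  have "M 1 / (2 * real k) \<le> (M 1 - M k) / (2 * real k)"
    using Mk k0 by (intro divide_right_mono) auto
  then show ?thesis
    unfolding M1[symmetric] using mu0_minus_kernel_sum[of t k] cells tail t k by fastforce
qed

definition K_antideriv :: "real \<Rightarrow> real \<Rightarrow> real" where
  "K_antideriv \<rho> u = (if \<rho> = 0 then ln u else u powr \<rho> / \<rho>)"

lemma K_antideriv_has_deriv:
  assumes u: "0 < u" shows "(K_antideriv \<rho> has_real_derivative u powr (\<rho> - 1)) (at u)"
proof (cases "\<rho> = 0")
  case True
  have "(ln has_real_derivative 1 / u) (at u)" using u by (auto intro!: derivative_eq_intros)
  moreover have "1 / u = u powr (\<rho> - 1)" using u True by (simp add: powr_minus divide_inverse)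
  ultimately show ?thesis using True by (simp add: K_antideriv_def[abs_def])
next
  case False
  have "((\<lambda>u. u powr \<rho> / \<rho>) has_real_derivative (\<rho> * u powr (\<rho> - 1)) / \<rho>) (at u)"
    using u by (auto intro!: derivative_eq_intros)
  then show ?thesis using False by (simp add: K_antideriv_def[abs_def])
qed

lemma K_fun_eq:
  assumes "1 \<le> lam" shows "K_fun \<rho> lam = K_antideriv \<rho> lam - K_antideriv \<rho> 1"
proof -
  have "((\<lambda>u. u powr (\<rho> - 1)) has_integral (K_antideriv \<rho> lam - K_antideriv \<rho> 1)) {1..lam}"
  proof (rule fundamental_theorem_of_calculus[OF assms])
    fix x assume "x \<in> {1..lam}"
    then show "(K_antideriv \<rho> has_vector_derivative x powr (\<rho> - 1)) (at x within {1..lam})"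
      using K_antideriv_has_deriv[of x \<rho>]
      by (simp add: has_real_derivative_iff_has_vector_derivative[symmetric] has_field_derivative_at_within)
  qed
  then show ?thesis unfolding K_fun_def by (rule integral_unique)
qed

(* K_rho(2) > 0 for rho <= 0; it normalises the increments of ln ell in the comparison of b. *)
lemma K_fun_2_pos: "\<rho> \<le> 0 \<Longrightarrow> K_fun \<rho> 2 > 0"
proof -
  assume r: "\<rho> \<le> 0"
  have "K_antideriv \<rho> 2 - K_antideriv \<rho> 1 > 0"
  proof (cases "\<rho> = 0")
    case False
    then have "\<rho> < 0" using r by simp
    then have "2 powr \<rho> < 1" by (simp add: powr_less_one)
    then show ?thesis using \<open>\<rho> < 0\<close> by (simp add: K_antideriv_def field_simps)
  qed (simp add: K_antideriv_def)
  then show ?thesis by (simp add: K_fun_eq)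
qed

lemma tendsto_K_fun:
  assumes g: "(g \<longlongrightarrow> L) F" and L: "1 \<le> L" and ge1: "\<forall>\<^sub>F n in F. 1 \<le> g n"
  shows "((\<lambda>n. K_fun \<rho> (g n)) \<longlongrightarrow> K_fun \<rho> L) F"
proof -
  have "((\<lambda>n. K_antideriv \<rho> (g n) - K_antideriv \<rho> 1) \<longlongrightarrow> K_antideriv \<rho> L - K_antideriv \<rho> 1) F"
    using L by (intro tendsto_diff tendsto_const isCont_tendsto_compose[OF _ g]
        DERIV_isCont[OF K_antideriv_has_deriv]) auto
  moreover have "\<forall>\<^sub>F n in F. K_antideriv \<rho> (g n) - K_antideriv \<rho> 1 = K_fun \<rho> (g n)"
    using ge1 by eventually_elim (simp add: K_fun_eq)
  ultimately show ?thesis using L by (simp add: K_fun_eq Lim_transform_eventually)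
qed

lemma K_fun_increment_limits:
  assumes rho: "\<rho> \<le> 0" and m_lim: "(m \<longlongrightarrow> 1) F" and m_ge1: "\<forall>\<^sub>F n in F. 1 \<le> m n"
  shows "((\<lambda>n. (K_fun \<rho> (2 * m n) - K_fun \<rho> (m n)) / K_fun \<rho> 2) \<longlongrightarrow> 1) F"
    and "((\<lambda>n. (\<bar>K_fun \<rho> (2 * m n)\<bar> + \<bar>K_fun \<rho> (m n)\<bar>) / K_fun \<rho> 2) \<longlongrightarrow> 1) F"
proof -
  have K2: "K_fun \<rho> 2 > 0" by (rule K_fun_2_pos[OF rho])
  have Km: "((\<lambda>n. K_fun \<rho> (m n)) \<longlongrightarrow> 0) F"
    using tendsto_K_fun[OF m_lim order.refl m_ge1, of \<rho>] by (simp add: K_fun_def)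
  have "((\<lambda>n. 2 * m n) \<longlongrightarrow> 2 * 1) F" by (intro tendsto_intros m_lim)
  moreover have "\<forall>\<^sub>F n in F. 1 \<le> 2 * m n" using m_ge1 by eventually_elim simp
  ultimately have K2m: "((\<lambda>n. K_fun \<rho> (2 * m n)) \<longlongrightarrow> K_fun \<rho> 2) F"
    by (intro tendsto_K_fun) simp_all
  show "((\<lambda>n. (K_fun \<rho> (2 * m n) - K_fun \<rho> (m n)) / K_fun \<rho> 2) \<longlongrightarrow> 1) F"
    using tendsto_divide[OF tendsto_diff[OF K2m Km] tendsto_const, of "K_fun \<rho> 2"] K2 by simp
  show "((\<lambda>n. (\<bar>K_fun \<rho> (2 * m n)\<bar> + \<bar>K_fun \<rho> (m n)\<bar>) / K_fun \<rho> 2) \<longlongrightarrow> 1) F"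
    using tendsto_divide[OF tendsto_add[OF tendsto_rabs[OF K2m] tendsto_rabs[OF Km]] tendsto_const,
      of "K_fun \<rho> 2"] K2 by simp
qed

(* The deterministic core of the comparison of b at two points x <= y = m x with 1 <= m <= 2:
   writing ln(ell(2y)/ell(y)) both directly and as a difference of increments from x,
   (A.2) forces b(y) K(2) to be close to b(x) (K(2m) - K(m)), hence b(y)/b(x) close to 1. *)
lemma b_ratio_pointwise:
  fixes bx bz K2 Km K2m \<epsilon> e u v w :: real
  assumes bx: "bx \<noteq> 0" and K2: "K2 > 0"
    and incr_x2: "\<bar>u - bx * K2m\<bar> \<le> \<epsilon> * \<bar>bx * K2m\<bar>"
    and incr_x1: "\<bar>v - bx * Km\<bar> \<le> \<epsilon> * \<bar>bx * Km\<bar>"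
    and incr_y: "\<bar>(u - v) - bz * K2\<bar> \<le> \<epsilon> * \<bar>bz * K2\<bar>"
    and c: "\<bar>(K2m - Km) / K2 - 1\<bar> < e / 2" and d: "(\<bar>K2m\<bar> + \<bar>Km\<bar>) / K2 < 2"
    and eps: "0 \<le> \<epsilon>" "\<epsilon> \<le> 1/2" "\<epsilon> \<le> e / 16" and e: "0 < e" "e \<le> 1"
  shows "\<bar>bz / bx - 1\<bar> < e"
proof -
  define r where "r = bz / bx"
  define cc where "cc = (K2m - Km) / K2"
  define dd where "dd = (\<bar>K2m\<bar> + \<bar>Km\<bar>) / K2"
  have bzr: "bz = r * bx" using bx by (simp add: r_def)
  have pos: "\<bar>bx\<bar> * K2 > 0" using bx K2 by simp
  have "\<bar>bz * K2 - bx * (K2m - Km)\<bar> \<le> \<epsilon> * \<bar>bz\<bar> * K2 + \<epsilon> * \<bar>bx\<bar> * (\<bar>K2m\<bar> + \<bar>Km\<bar>)"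
    using incr_x2 incr_x1 incr_y K2 by (simp add: abs_mult algebra_simps) linarith
  moreover have "\<bar>bz * K2 - bx * (K2m - Km)\<bar> = (\<bar>bx\<bar> * K2) * \<bar>r - cc\<bar>"
  proof -
    have "K2m - Km = cc * K2" using K2 by (simp add: cc_def)
    then have "bz * K2 - bx * (K2m - Km) = (bx * K2) * (r - cc)" by (simp add: bzr algebra_simps)
    then show ?thesis using K2 by (simp add: abs_mult)
  qed
  moreover have "\<epsilon> * \<bar>bz\<bar> * K2 + \<epsilon> * \<bar>bx\<bar> * (\<bar>K2m\<bar> + \<bar>Km\<bar>) = (\<bar>bx\<bar> * K2) * (\<epsilon> * \<bar>r\<bar> + \<epsilon> * dd)"
    using K2 by (simp add: bzr dd_def abs_mult field_simps)
  ultimately have rc: "\<bar>r - cc\<bar> \<le> \<epsilon> * \<bar>r\<bar> + \<epsilon> * dd"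
    using pos by (simp add: mult_le_cancel_left_pos)
  have c1: "\<bar>cc - 1\<bar> < e / 2" and d2: "dd < 2" using c d by (simp_all add: cc_def dd_def)
  have "\<epsilon> * \<bar>r\<bar> \<le> \<bar>r\<bar> / 2" using mult_right_mono[OF eps(2) abs_ge_zero[of r]] by simp
  moreover have "\<epsilon> * dd \<le> 1"
    using eps d2 mult_mono[of \<epsilon> "1/2" dd 2] mult_nonneg_nonpos[of \<epsilon> dd] by (cases "dd \<ge> 0") auto
  ultimately have "\<bar>r\<bar> \<le> 5" using rc c1 e by linarith
  then have "\<epsilon> * \<bar>r\<bar> \<le> (e / 16) * 5" using eps by (intro mult_mono) auto
  moreover have "\<epsilon> * dd \<le> (e / 16) * 2"
    using eps d2 e mult_mono[of \<epsilon> "e/16" dd 2] mult_nonneg_nonpos[of \<epsilon> dd] by (cases "dd \<ge> 0") auto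
  ultimately have "\<bar>r - 1\<bar> < e" using rc c1 e by linarith
  then show ?thesis by (simp add: r_def)
qed

(* Under (A.2), b is asymptotically constant along comparable arguments: if x -> oo and
   y/x -> 1 with x <= y, then b(y)/b(x) -> 1.  This is the only consequence of (A.2) used. *)
lemma b_ratio_tendsto_one:
  fixes x y :: "'a \<Rightarrow> real"
  assumes A2: "assm_A2 ell \<rho> b" and ell_pos: "\<forall>\<^sub>F z in at_top. ell z > 0"
    and x_lim: "filterlim x at_top F" and ratio: "((\<lambda>n. y n / x n) \<longlongrightarrow> 1) F"
    and x_le_y: "\<forall>\<^sub>F n in F. x n \<le> y n"
  shows "((\<lambda>n. b (y n) / b (x n)) \<longlongrightarrow> 1) F"
proof -
  have rho: "\<rho> \<le> 0" and b_nz: "\<forall>\<^sub>F z in at_top. b z \<noteq> 0"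
    and unif: "\<And>\<Lambda> \<epsilon>. \<Lambda> \<ge> 1 \<Longrightarrow> \<epsilon> > 0 \<Longrightarrow> \<forall>\<^sub>F z in at_top. \<forall>lam\<in>{1..\<Lambda>}.
          \<bar>ln (ell (lam * z) / ell z) - b z * K_fun \<rho> lam\<bar> \<le> \<epsilon> * \<bar>b z * K_fun \<rho> lam\<bar>"
    using A2 unfolding assm_A2_def by auto
  define K where "K = K_fun \<rho>"
  define m where "m n = y n / x n" for n
  have K2: "K 2 > 0" using K_fun_2_pos[OF rho] by (simp add: K_def)
  have y_lim: "filterlim y at_top F" by (rule filterlim_at_top_mono[OF x_lim x_le_y])
  have y2_lim: "filterlim (\<lambda>n. 2 * y n) at_top F"
    by (intro filterlim_tendsto_pos_mult_at_top[OF tendsto_const _ y_lim]) simp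
  have x_pos: "\<forall>\<^sub>F n in F. x n > 0" using x_lim by (simp add: filterlim_at_top_dense)
  have m_ge1: "\<forall>\<^sub>F n in F. 1 \<le> m n" using x_pos x_le_y by eventually_elim (simp add: m_def)
  have m_lim: "(m \<longlongrightarrow> 1) F" using ratio by (simp add: m_def[abs_def])
  have m_less2: "\<forall>\<^sub>F n in F. m n < 2" using m_lim by (rule order_tendstoD) simp
  note incr_lim = K_fun_increment_limits(1)[OF rho m_lim m_ge1, folded K_def]
  note size_lim = K_fun_increment_limits(2)[OF rho m_lim m_ge1, folded K_def]
  show ?thesis
    unfolding tendsto_iff dist_real_def
  proof (intro allI impI)
    fix e :: real assume "e > 0"
    define e' where "e' = min e 1"
    define \<epsilon> where "\<epsilon> = min (1/2) (e' / 16)"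
    have e': "0 < e'" "e' \<le> 1" "e' \<le> e" using \<open>e > 0\<close> by (auto simp: e'_def)
    have eps: "0 < \<epsilon>" "\<epsilon> \<le> 1/2" "\<epsilon> \<le> e' / 16" using e' by (auto simp: \<epsilon>_def)
    have U: "\<forall>\<^sub>F z in at_top. \<forall>lam\<in>{1..4}.
          \<bar>ln (ell (lam * z) / ell z) - b z * K lam\<bar> \<le> \<epsilon> * \<bar>b z * K lam\<bar>"
      using unif[of 4 \<epsilon>] eps by (simp add: K_def)
    have incr: "\<forall>\<^sub>F n in F. \<bar>(K (2 * m n) - K (m n)) / K 2 - 1\<bar> < e' / 2"
      using incr_lim[unfolded tendsto_iff dist_real_def, rule_format, of "e' / 2"] e' by simp
    have size: "\<forall>\<^sub>F n in F. (\<bar>K (2 * m n)\<bar> + \<bar>K (m n)\<bar>) / K 2 < 2"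
      using size_lim by (rule order_tendstoD) simp
    have "\<forall>\<^sub>F n in F. \<bar>b (y n) / b (x n) - 1\<bar> < e'"
      using incr size m_ge1 m_less2 x_pos
        eventually_compose_filterlim[OF U x_lim] eventually_compose_filterlim[OF U y_lim]
        eventually_compose_filterlim[OF ell_pos x_lim] eventually_compose_filterlim[OF ell_pos y_lim]
        eventually_compose_filterlim[OF ell_pos y2_lim] eventually_compose_filterlim[OF b_nz x_lim]
    proof eventually_elim
      case (elim n)
      have y: "y n = m n * x n" using elim(5) by (simp add: m_def)
      have at_x2: "\<bar>ln (ell (2 * m n * x n) / ell (x n)) - b (x n) * K (2 * m n)\<bar>
          \<le> \<epsilon> * \<bar>b (x n) * K (2 * m n)\<bar>"
        using bspec[OF elim(6), of "2 * m n"] elim(3,4) by simp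
      have at_x1: "\<bar>ln (ell (m n * x n) / ell (x n)) - b (x n) * K (m n)\<bar> \<le> \<epsilon> * \<bar>b (x n) * K (m n)\<bar>"
        using bspec[OF elim(6), of "m n"] elim(3,4) by simp
      have "ln (ell (2 * m n * x n) / ell (x n)) - ln (ell (m n * x n) / ell (x n))
          = ln (ell (2 * y n) / ell (y n))"
        using elim(8,9,10) y by (simp add: ln_div mult.assoc)
      with bspec[OF elim(7), of 2]
      have at_y: "\<bar>(ln (ell (2 * m n * x n) / ell (x n)) - ln (ell (m n * x n) / ell (x n)))
          - b (y n) * K 2\<bar> \<le> \<epsilon> * \<bar>b (y n) * K 2\<bar>"
        by simp
      show ?case
        by (rule b_ratio_pointwise[OF elim(11) K2 at_x2 at_x1 at_y elim(1,2)])
          (use eps e' in auto)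
    qed
    then show "\<forall>\<^sub>F n in F. \<bar>b (y n) / b (x n) - 1\<bar> < e"
      by eventually_elim (use e' in linarith)
  qed
qed

lemma k_sequence_asymptotics:
  fixes k :: "nat \<Rightarrow> nat"
  assumes k_range: "\<forall>n\<ge>2. 1 \<le> k n \<and> k n < n"
    and k_inf: "filterlim k at_top sequentially"
    and k_log: "(\<lambda>n. ln (real (k n)) / ln (real n)) \<longlonglongrightarrow> 0"
  shows "filterlim (\<lambda>n. ln (real n / real (k n))) at_top sequentially"
    and "((\<lambda>n. ln (real n / real (k n)) / ln (real n)) \<longlongrightarrow> 1) sequentially"
    and "((\<lambda>n. ln (real (k n)) / ln (real n / real (k n))) \<longlongrightarrow> 0) sequentially"
    and "filterlim (\<lambda>n. ln (real (k n))) at_top sequentially"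
    and "((\<lambda>n. ln (real (k n)) / real (k n)) \<longlongrightarrow> 0) sequentially"
    and "\<forall>\<^sub>F n in sequentially. 2 \<le> k n \<and> ln (real n / real (k n)) \<le> ln (real n)"
proof -
  have real_k: "filterlim (\<lambda>n. real (k n)) at_top sequentially"
    by (rule filterlim_compose[OF filterlim_real_sequentially k_inf])
  have ln_n: "filterlim (\<lambda>n. ln (real n)) at_top sequentially"
    by (rule filterlim_compose[OF ln_at_top filterlim_real_sequentially])
  show "filterlim (\<lambda>n. ln (real (k n))) at_top sequentially"
    by (rule filterlim_compose[OF ln_at_top real_k])
  have ev: "\<forall>\<^sub>F n in sequentially. 2 \<le> k n \<and> 0 < ln (real (k n))
      \<and> ln (real n / real (k n)) = ln (real n) - ln (real (k n)) \<and> 0 < ln (real n)"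
    using k_inf[unfolded filterlim_at_top, rule_format, of 2] eventually_ge_at_top[of 2]
  proof eventually_elim
    case (elim n)
    then show ?case using k_range by (simp add: ln_div)
  qed
  then show "\<forall>\<^sub>F n in sequentially. 2 \<le> k n \<and> ln (real n / real (k n)) \<le> ln (real n)"
    by eventually_elim auto
  have "((\<lambda>n. 1 - ln (real (k n)) / ln (real n)) \<longlongrightarrow> 1 - 0) sequentially"
    by (intro tendsto_intros k_log)
  moreover have "\<forall>\<^sub>F n in sequentially.
      1 - ln (real (k n)) / ln (real n) = ln (real n / real (k n)) / ln (real n)"
    using ev by eventually_elim (simp add: diff_divide_distrib)
  ultimately show ratio: "((\<lambda>n. ln (real n / real (k n)) / ln (real n)) \<longlongrightarrow> 1) sequentially"
    by (simp add: tendsto_cong)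
  have "filterlim (\<lambda>n. ln (real n / real (k n)) / ln (real n) * ln (real n)) at_top sequentially"
    by (rule filterlim_tendsto_pos_mult_at_top[OF ratio _ ln_n]) simp
  then show "filterlim (\<lambda>n. ln (real n / real (k n))) at_top sequentially"
    by (rule filterlim_cong[THEN iffD1, rotated 3]) (use ev in \<open>auto elim: eventually_mono\<close>)
  have "((\<lambda>n. (ln (real (k n)) / ln (real n)) / (ln (real n / real (k n)) / ln (real n)))
      \<longlongrightarrow> 0 / 1) sequentially"
    by (intro tendsto_intros k_log ratio) simp
  moreover have "\<forall>\<^sub>F n in sequentially. (ln (real (k n)) / ln (real n)) / (ln (real n / real (k n)) / ln (real n))
      = ln (real (k n)) / ln (real n / real (k n))"
    using ev by eventually_elim simp
  ultimately show "((\<lambda>n. ln (real (k n)) / ln (real n / real (k n))) \<longlongrightarrow> 0) sequentially"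
    by (simp add: Lim_transform_eventually)
  have "((\<lambda>x::real. ln x / x) \<longlongrightarrow> 0) at_top" by real_asymp
  then show "((\<lambda>n. ln (real (k n)) / real (k n)) \<longlongrightarrow> 0) sequentially"
    by (rule filterlim_compose[OF _ real_k])
qed

lemma a_n_T1_eq_zero: "ln (real n / real k) > 2 \<Longrightarrow> a_n T1 n k = 0"
  using mu0_second_order(3)[of "ln (real n / real k)"] by (simp add: a_n_def T1_def)

lemma a_n_T3_eq: "ln (real n / real k) * a_n T3 n k
    = ln (real n / real k) * (ln (real n / real k) * mu0 (ln (real n / real k)) - 1)"
  by (simp add: a_n_def T3_def algebra_simps)

lemma tendsto_mu0_second_order: "((\<lambda>t. t * (t * mu0 t - 1)) \<longlongrightarrow> -1) at_top"
proof (rule tendsto_sandwich[where f="\<lambda>t. -1" and h="\<lambda>t. -1 + 2 / t"])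
  show "\<forall>\<^sub>F t in at_top. -1 \<le> t * (t * mu0 t - 1)"
    using eventually_gt_at_top[of 2] by eventually_elim (rule mu0_second_order(1))
  show "\<forall>\<^sub>F t in at_top. t * (t * mu0 t - 1) \<le> -1 + 2 / t"
    using eventually_gt_at_top[of 2] by eventually_elim (rule mu0_second_order(2))
  show "((\<lambda>t::real. -1 + 2 / t) \<longlongrightarrow> -1) at_top" by real_asymp
qed simp

lemma tendsto_t_mu0: "((\<lambda>t. t * mu0 t) \<longlongrightarrow> 1) at_top"
proof -
  have "((\<lambda>t. 1 + t * (t * mu0 t - 1) / t) \<longlongrightarrow> 1 + 0) at_top"
    by (intro tendsto_add tendsto_const tendsto_divide_0[OF tendsto_mu0_second_order]
        filterlim_at_top_imp_at_infinity filterlim_ident)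
  moreover have "\<forall>\<^sub>F t in at_top. 1 + t * (t * mu0 t - 1) / t = t * mu0 t"
    using eventually_gt_at_top[of 0] by eventually_elim simp
  ultimately show ?thesis by (simp add: tendsto_cong)
qed

(* Rescaled, the gap between mu0 t and the Riemann sum is squeezed between two quantities
   that both tend to 1 when ln k -> oo and ln k / t -> 0. *)
lemma kernel_sum_gap_scaled_bounds:
  fixes t :: real and k :: nat
  assumes t: "t \<ge> 2" and k: "k \<ge> 2"
  defines "G \<equiv> (mu0 t - (1 / real k) * (\<Sum>i=1..k. sum_kernel t (real i / real k)))
      * (2 * real k * t / ln (real k))"
  shows "ln (2 * real k / 3) / ln (real k) * (1 - ln (2 * real k / 3) / t / 2) \<le> G"
    and "G \<le> 1 + 2 / ln (real k)"
proof -
  define L where "L = ln (real k)"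
  define l where "l = ln (2 * real k / 3)"
  have k0: "real k \<ge> 2" using k by simp
  have L: "L > 0" using k0 by (simp add: L_def)
  have l: "l \<ge> 0" using k0 by (simp add: l_def)
  have scale: "2 * real k * t / L > 0" using k0 t L by simp
  have "ln (1 + L / t) \<le> L / t" using L t by (intro ln_add_one_self_le_self) simp
  then have "ln (1 + L / t) / (2 * real k) \<le> L / t / (2 * real k)"
    using k0 by (intro divide_right_mono) auto
  then have "mu0 t - (1 / real k) * (\<Sum>i=1..k. sum_kernel t (real i / real k))
      \<le> L / t / (2 * real k) + 1 / (real k * t)"
    using mu0_minus_kernel_sum_upper[OF t k] unfolding L_def by linarith
  then have "G \<le> (L / t / (2 * real k) + 1 / (real k * t)) * (2 * real k * t / L)"
    unfolding G_def L_def[symmetric] using scale by (intro mult_right_mono) auto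
  also have "\<dots> = 1 + 2 / L" using k0 t L by (simp add: field_simps)
  finally show "G \<le> 1 + 2 / ln (real k)" by (simp add: L_def)
  have "(l / t - (l / t)\<^sup>2 / 2) / (2 * real k) \<le> ln (1 + l / t) / (2 * real k)"
    using ln_one_plus_ge_quadratic[of "l / t"] l t k0 by (intro divide_right_mono) auto
  then have low: "(l / t - (l / t)\<^sup>2 / 2) / (2 * real k) * (2 * real k * t / L) \<le> G"
    unfolding G_def L_def[symmetric]
    using mu0_minus_kernel_sum_lower[OF t k] scale
    by (intro mult_right_mono) (auto simp: l_def)
  have "(l / t - (l / t)\<^sup>2 / 2) / (2 * real k) * (2 * real k * t / L) = l / L * (1 - l / t / 2)"
    using k0 t L by (simp add: field_simps power2_eq_square)
  with low show "ln (2 * real k / 3) / ln (real k) * (1 - ln (2 * real k / 3) / t / 2) \<le> G"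
    unfolding l_def[symmetric] L_def[symmetric] by (simp only:)
qed

lemma tendsto_kernel_sum_gap:
  fixes t :: "'a \<Rightarrow> real" and k :: "'a \<Rightarrow> nat"
  assumes t_lim: "filterlim t at_top F"
    and L_lim: "filterlim (\<lambda>n. ln (real (k n))) at_top F"
    and L_t: "((\<lambda>n. ln (real (k n)) / t n) \<longlongrightarrow> 0) F"
    and k2: "\<forall>\<^sub>F n in F. 2 \<le> k n"
  shows "((\<lambda>n. (mu0 (t n) - (1 / real (k n)) * (\<Sum>i=1..k n. sum_kernel (t n) (real i / real (k n))))
      * (2 * real (k n) * t n / ln (real (k n)))) \<longlongrightarrow> 1) F"
proof (rule tendsto_sandwich)
  define l where "l n = ln (2 * real (k n) / 3)" for n
  let ?L = "\<lambda>n. ln (real (k n))"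
  have L_inf: "filterlim ?L at_infinity F" by (rule filterlim_at_top_imp_at_infinity[OF L_lim])
  have t2: "\<forall>\<^sub>F n in F. 2 \<le> t n" using t_lim by (simp add: filterlim_at_top)
  have l_eq: "\<forall>\<^sub>F n in F. l n = ?L n + (ln 2 - ln 3)"
    using k2 by eventually_elim (simp add: l_def ln_div ln_mult)
  have "((\<lambda>n. 1 + (ln 2 - ln 3) / ?L n) \<longlongrightarrow> 1 + 0) F"
    by (intro tendsto_add tendsto_const tendsto_divide_0[OF tendsto_const L_inf])
  moreover have "\<forall>\<^sub>F n in F. 1 + (ln 2 - ln 3) / ?L n = l n / ?L n"
    using l_eq k2 by eventually_elim (simp add: field_simps)
  ultimately have l_L: "((\<lambda>n. l n / ?L n) \<longlongrightarrow> 1) F" by (simp add: Lim_transform_eventually)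
  have "((\<lambda>n. ?L n / t n + (ln 2 - ln 3) / t n) \<longlongrightarrow> 0 + 0) F"
    by (intro tendsto_add L_t tendsto_divide_0[OF tendsto_const filterlim_at_top_imp_at_infinity[OF t_lim]])
  moreover have "\<forall>\<^sub>F n in F. ?L n / t n + (ln 2 - ln 3) / t n = l n / t n"
    using l_eq by eventually_elim (simp add: add_divide_distrib)
  ultimately have l_t: "((\<lambda>n. l n / t n) \<longlongrightarrow> 0) F" by (simp add: Lim_transform_eventually)
  show "\<forall>\<^sub>F n in F. l n / ?L n * (1 - l n / t n / 2) \<le> (mu0 (t n) - (1 / real (k n))
      * (\<Sum>i=1..k n. sum_kernel (t n) (real i / real (k n)))) * (2 * real (k n) * t n / ?L n)"
    using t2 k2 by eventually_elim (unfold l_def, rule kernel_sum_gap_scaled_bounds)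
  show "\<forall>\<^sub>F n in F. (mu0 (t n) - (1 / real (k n)) * (\<Sum>i=1..k n. sum_kernel (t n) (real i / real (k n))))
      * (2 * real (k n) * t n / ?L n) \<le> 1 + 2 / ?L n"
    using t2 k2 by eventually_elim (rule kernel_sum_gap_scaled_bounds)
  have "((\<lambda>n. l n / ?L n * (1 - l n / t n / 2)) \<longlongrightarrow> 1 * (1 - 0 / 2)) F"
    by (intro tendsto_intros l_L l_t) simp
  then show "((\<lambda>n. l n / ?L n * (1 - l n / t n / 2)) \<longlongrightarrow> 1) F" by simp
  have "((\<lambda>n. 1 + 2 / ?L n) \<longlongrightarrow> 1 + 0) F"
    by (intro tendsto_add tendsto_const tendsto_divide_0[OF tendsto_const L_inf])
  then show "((\<lambda>n. 1 + 2 / ?L n) \<longlongrightarrow> 1) F" by simp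
qed

lemma eventually_a_n_T1_zero:
  fixes k :: "nat \<Rightarrow> nat"
  assumes "filterlim (\<lambda>n. ln (real n / real (k n))) at_top sequentially"
  shows "\<forall>\<^sub>F n in sequentially. a_n T1 n (k n) = 0"
  using assms[unfolded filterlim_at_top_dense, rule_format, of 2]
  by eventually_elim (rule a_n_T1_eq_zero)

lemma tendsto_a_n_T3:
  fixes k :: "nat \<Rightarrow> nat"
  assumes "filterlim (\<lambda>n. ln (real n / real (k n))) at_top sequentially"
  shows "((\<lambda>n. ln (real n / real (k n)) * a_n T3 n (k n)) \<longlongrightarrow> -1) sequentially"
  unfolding a_n_T3_eq by (rule filterlim_compose[OF tendsto_mu0_second_order assms])

lemma tendsto_a_n_T2:
  fixes k :: "nat \<Rightarrow> nat"
  assumes k_range: "\<forall>n\<ge>2. 1 \<le> k n \<and> k n < n"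
    and k_inf: "filterlim k at_top sequentially"
    and k_log: "(\<lambda>n. ln (real (k n)) / ln (real n)) \<longlonglongrightarrow> 0"
  shows "((\<lambda>n. 2 * real (k n) / ln (real (k n)) * a_n T2 n (k n)) \<longlongrightarrow> 1) sequentially"
proof -
  define t where "t n = ln (real n / real (k n))" for n
  define L where "L n = ln (real (k n))" for n
  define gap where "gap n = mu0 (t n) - T2 n (k n)" for n
  define Q where "Q n = gap n * (2 * real (k n) * t n / L n)" for n
  note asy = k_sequence_asymptotics[OF k_range k_inf k_log]
  have "\<forall>\<^sub>F n in sequentially. 2 \<le> k n" using asy(6) by eventually_elim simp
  from tendsto_kernel_sum_gap[OF asy(1,4,3) this]
  have Q_lim: "(Q \<longlongrightarrow> 1) sequentially"
    by (simp add: Q_def[abs_def] gap_def T2_as_kernel_sum t_def L_def)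
  have ev: "\<forall>\<^sub>F n in sequentially. 2 \<le> k n \<and> 0 < t n"
    using asy(6) asy(1)[unfolded filterlim_at_top_dense, rule_format, of 0]
    by eventually_elim (simp add: t_def)
  \<comment> \<open>t * gap = Q * ln k / (2k) tends to 0, so t * T2 = t * mu0 t - t * gap tends to 1.\<close>
  have "((\<lambda>n. Q n * (L n / real (k n) / 2)) \<longlongrightarrow> 1 * (0 / 2)) sequentially"
    using asy(5) by (intro tendsto_intros Q_lim) (simp_all add: L_def)
  moreover have "\<forall>\<^sub>F n in sequentially. Q n * (L n / real (k n) / 2) = t n * gap n"
    using ev by eventually_elim (simp add: Q_def L_def)
  ultimately have t_gap: "((\<lambda>n. t n * gap n) \<longlongrightarrow> 0) sequentially"
    by (simp add: Lim_transform_eventually)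
  have "((\<lambda>n. t n * mu0 (t n) - t n * gap n) \<longlongrightarrow> 1 - 0) sequentially"
    using asy(1) by (intro tendsto_diff t_gap filterlim_compose[OF tendsto_t_mu0]) (simp add: t_def[abs_def])
  then have t_T2: "((\<lambda>n. t n * T2 n (k n)) \<longlongrightarrow> 1) sequentially"
    by (simp add: gap_def algebra_simps)
  have "((\<lambda>n. Q n / (t n * T2 n (k n))) \<longlongrightarrow> 1 / 1) sequentially"
    by (intro tendsto_divide Q_lim t_T2) simp
  moreover have "\<forall>\<^sub>F n in sequentially. Q n / (t n * T2 n (k n))
      = 2 * real (k n) / ln (real (k n)) * a_n T2 n (k n)"
    using ev order_tendstoD(1)[OF t_T2, of 0, simplified]
  proof eventually_elim
    case (elim n)
    then have "T2 n (k n) \<noteq> 0" "L n > 0" by (auto simp: L_def)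
    then show ?case using elim
      by (simp add: Q_def gap_def a_n_def t_def[symmetric] L_def[symmetric] field_simps)
  qed
  ultimately show ?thesis by (simp add: Lim_transform_eventually)
qed

lemma AMSE_minus_AMSE_T1:
  assumes "a_n T1 n k = 0"
  shows "AMSE T \<theta> b n k - AMSE T1 \<theta> b n k
    = \<theta> * a_n T n k * (\<theta> * a_n T n k + 2 * b (ln (real n / real k)))"
  using assms by (simp add: AMSE_def power2_eq_square algebra_simps)

lemma eventually_sign_of_sum:
  fixes u v :: "'a \<Rightarrow> real"
  assumes u: "(u \<longlongrightarrow> a) F" and v: "((\<lambda>n. ereal (v n)) \<longlongrightarrow> \<beta>) F"
  shows "\<beta> > ereal (- a) \<Longrightarrow> \<forall>\<^sub>F n in F. u n + v n > 0"
    and "\<beta> < ereal (- a) \<Longrightarrow> \<forall>\<^sub>F n in F. u n + v n < 0"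
proof -
  assume "\<beta> > ereal (- a)"
  then obtain c where c: "ereal (- a) < ereal c" "ereal c < \<beta>" using ereal_dense2 by blast
  have "\<forall>\<^sub>F n in F. - c < u n" using u by (rule order_tendstoD) (use c in simp)
  moreover have "\<forall>\<^sub>F n in F. c < v n" using order_tendstoD(1)[OF v c(2)] by simp
  ultimately show "\<forall>\<^sub>F n in F. u n + v n > 0" by eventually_elim simp
next
  assume "\<beta> < ereal (- a)"
  then obtain c where c: "\<beta> < ereal c" "ereal c < ereal (- a)" using ereal_dense2 by blast
  have "\<forall>\<^sub>F n in F. u n < - c" using u by (rule order_tendstoD) (use c in simp)
  moreover have "\<forall>\<^sub>F n in F. v n < c" using order_tendstoD(2)[OF v c(1)] by simp
  ultimately show "\<forall>\<^sub>F n in F. u n + v n < 0" by eventually_elim simp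
qed

(* Indeed (2k/ln k)(theta a_n T2 + 2B) = theta R - r rho with R -> 1 (bias of T2),
   r -> alpha (hypothesis) and rho = b(ln (n/k)) / b(ln n) -> 1 (slow variation of b). *)
lemma excess_T2_sign:
  fixes k :: "nat \<Rightarrow> nat" and \<theta> :: real and \<alpha> :: ereal
  assumes A2: "assm_A2 ell \<rho> b" and ell_pos: "\<forall>\<^sub>F z in at_top. ell z > 0"
    and k_range: "\<forall>n\<ge>2. 1 \<le> k n \<and> k n < n"
    and k_inf: "filterlim k at_top sequentially"
    and k_log: "(\<lambda>n. ln (real (k n)) / ln (real n)) \<longlonglongrightarrow> 0"
    and \<alpha>: "((\<lambda>n. ereal (- 4 * b (ln (real n)) * real (k n) / ln (real (k n)))) \<longlongrightarrow> \<alpha>) sequentially"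
  defines "E \<equiv> \<lambda>n. \<theta> * a_n T2 n (k n) + 2 * b (ln (real n / real (k n)))"
  shows "\<alpha> > ereal \<theta> \<Longrightarrow> \<forall>\<^sub>F n in sequentially. E n < 0"
    and "\<alpha> < ereal \<theta> \<Longrightarrow> \<forall>\<^sub>F n in sequentially. E n > 0"
proof -
  define R where "R n = 2 * real (k n) / ln (real (k n)) * a_n T2 n (k n)" for n
  define r where "r n = - 4 * b (ln (real n)) * real (k n) / ln (real (k n))" for n
  define \<rho>n where "\<rho>n n = b (ln (real n / real (k n))) / b (ln (real n))" for n
  note asy = k_sequence_asymptotics[OF k_range k_inf k_log]
  have "((\<lambda>n. b (ln (real n)) / b (ln (real n / real (k n)))) \<longlongrightarrow> 1) sequentially"
  proof (rule b_ratio_tendsto_one[OF A2 ell_pos asy(1)])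
    show "((\<lambda>n. ln (real n) / ln (real n / real (k n))) \<longlongrightarrow> 1) sequentially"
      using tendsto_inverse[OF asy(2)] by (simp add: inverse_eq_divide)
  qed (use asy(6) in \<open>auto elim: eventually_mono\<close>)
  from tendsto_inverse[OF this] have \<rho>_lim: "(\<rho>n \<longlongrightarrow> 1) sequentially"
    by (simp add: \<rho>n_def[abs_def] inverse_eq_divide)
  have "((\<lambda>n. ereal (r n) * ereal (\<rho>n n)) \<longlongrightarrow> \<alpha> * ereal 1) sequentially"
    using \<alpha> \<rho>_lim by (intro tendsto_mult_ereal) (auto simp: r_def[abs_def])
  then have "((\<lambda>n. ereal (r n * \<rho>n n)) \<longlongrightarrow> \<alpha>) sequentially" by simp
  from tendsto_uminus_ereal[OF this]
  have v: "((\<lambda>n. ereal (- (r n * \<rho>n n))) \<longlongrightarrow> - \<alpha>) sequentially" by simp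
  have u: "((\<lambda>n. \<theta> * R n) \<longlongrightarrow> \<theta>) sequentially"
    using tendsto_mult_left[OF tendsto_a_n_T2[OF k_range k_inf k_log], of \<theta>]
    by (simp add: R_def[abs_def])
  have b_nz: "\<forall>\<^sub>F z in at_top. b z \<noteq> 0" using A2 unfolding assm_A2_def by blast
  have ln_n: "filterlim (\<lambda>n. ln (real n)) at_top sequentially"
    by (rule filterlim_compose[OF ln_at_top filterlim_real_sequentially])
  define c where "c n = 2 * real (k n) / ln (real (k n))" for n
  have ev: "\<forall>\<^sub>F n in sequentially. c n > 0 \<and> \<theta> * R n + - (r n * \<rho>n n) = c n * E n"
    using asy(6) eventually_compose_filterlim[OF b_nz ln_n]
    by eventually_elim (auto simp: c_def R_def r_def \<rho>n_def E_def field_simps)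
  show "\<forall>\<^sub>F n in sequentially. E n < 0" if "\<alpha> > ereal \<theta>"
  proof -
    have "- \<alpha> < ereal (- \<theta>)" using that by (subst ereal_uminus_less_reorder) simp
    from eventually_sign_of_sum(2)[OF u v this] ev
    show ?thesis by eventually_elim (metis mult_less_0_iff not_less_iff_gr_or_eq)
  qed
  show "\<forall>\<^sub>F n in sequentially. E n > 0" if "\<alpha> < ereal \<theta>"
  proof -
    have "- \<alpha> > ereal (- \<theta>)" using that by (subst ereal_less_uminus_reorder) simp
    from eventually_sign_of_sum(1)[OF u v this] ev
    show ?thesis by eventually_elim (metis zero_less_mult_iff not_less_iff_gr_or_eq)
  qed
qed

(* Case (ii): the sign of theta a_n T3 + 2 b(t), t = ln (n/k), is eventually that of
   beta - theta, since t (theta a_n T3 + 2 b(t)) = theta (t a_n T3) + 2 t b(t) -> -theta + beta. *)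
lemma excess_T3_sign:
  fixes k :: "nat \<Rightarrow> nat" and \<theta> :: real and \<beta> :: ereal
  assumes k_range: "\<forall>n\<ge>2. 1 \<le> k n \<and> k n < n"
    and k_inf: "filterlim k at_top sequentially"
    and k_log: "(\<lambda>n. ln (real (k n)) / ln (real n)) \<longlonglongrightarrow> 0"
    and \<beta>: "((\<lambda>x. ereal (2 * x * b x)) \<longlongrightarrow> \<beta>) at_top"
  defines "E \<equiv> \<lambda>n. \<theta> * a_n T3 n (k n) + 2 * b (ln (real n / real (k n)))"
  shows "\<beta> > ereal \<theta> \<Longrightarrow> \<forall>\<^sub>F n in sequentially. E n > 0"
    and "\<beta> < ereal \<theta> \<Longrightarrow> \<forall>\<^sub>F n in sequentially. E n < 0"
proof -
  define t where "t n = ln (real n / real (k n))" for n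
  have t_lim: "filterlim t at_top sequentially"
    using k_sequence_asymptotics(1)[OF k_range k_inf k_log] by (simp add: t_def[abs_def])
  have u: "((\<lambda>n. \<theta> * (t n * a_n T3 n (k n))) \<longlongrightarrow> - \<theta>) sequentially"
    using tendsto_mult_left[OF tendsto_a_n_T3[OF t_lim[unfolded t_def]], of \<theta>]
    by (simp add: t_def)
  have v: "((\<lambda>n. ereal (2 * t n * b (t n))) \<longlongrightarrow> \<beta>) sequentially"
    using filterlim_compose[OF \<beta> t_lim] by simp
  have ev: "\<forall>\<^sub>F n in sequentially. t n > 0 \<and> \<theta> * (t n * a_n T3 n (k n)) + 2 * t n * b (t n) = t n * E n"
    using t_lim[unfolded filterlim_at_top_dense, rule_format, of 0]
    by eventually_elim (simp add: E_def t_def algebra_simps)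
  show "\<forall>\<^sub>F n in sequentially. E n > 0" if "\<beta> > ereal \<theta>"
  proof -
    have "\<beta> > ereal (- (- \<theta>))" using that by simp
    from eventually_sign_of_sum(1)[OF u v this] ev
    show ?thesis by eventually_elim (simp add: zero_less_mult_iff)
  qed
  show "\<forall>\<^sub>F n in sequentially. E n < 0" if "\<beta> < ereal \<theta>"
  proof -
    have "\<beta> < ereal (- (- \<theta>))" using that by simp
    from eventually_sign_of_sum(2)[OF u v this] ev
    show ?thesis by eventually_elim (simp add: mult_less_0_iff)
  qed
qed

lemma eventually_bias_signs:
  fixes k :: "nat \<Rightarrow> nat"
  assumes k_range: "\<forall>n\<ge>2. 1 \<le> k n \<and> k n < n"
    and k_inf: "filterlim k at_top sequentially"
    and k_log: "(\<lambda>n. ln (real (k n)) / ln (real n)) \<longlonglongrightarrow> 0"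
  shows "\<forall>\<^sub>F n in sequentially. a_n T1 n (k n) = 0 \<and> a_n T2 n (k n) > 0 \<and> a_n T3 n (k n) < 0"
proof -
  note asy = k_sequence_asymptotics[OF k_range k_inf k_log]
  have T2: "\<forall>\<^sub>F n in sequentially. 2 * real (k n) / ln (real (k n)) * a_n T2 n (k n) > 0"
    using tendsto_a_n_T2[OF k_range k_inf k_log] by (rule order_tendstoD) simp
  have T3: "\<forall>\<^sub>F n in sequentially. ln (real n / real (k n)) * a_n T3 n (k n) < 0"
    using tendsto_a_n_T3[OF asy(1)] by (rule order_tendstoD) simp
  show ?thesis
    using eventually_a_n_T1_zero[OF asy(1)] T2 T3 asy(6)
      asy(1)[unfolded filterlim_at_top_dense, rule_format, of 0]
  proof eventually_elim
    case (elim n)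
    then have "2 * real (k n) / ln (real (k n)) > 0" by simp
    then have "a_n T2 n (k n) > 0" by (rule zero_less_mult_pos[OF elim(2)])
    moreover have "a_n T3 n (k n) < 0" using elim(3,5) by (simp add: mult_less_0_iff)
    ultimately show ?case using elim(1) by simp
  qed
qed

lemma AMSE_order_by_signs:
  assumes "a_n T1 n k = 0" "\<theta> > 0"
  shows "a_n T n k * (\<theta> * a_n T n k + 2 * b (ln (real n / real k))) < 0
      \<Longrightarrow> AMSE T \<theta> b n k < AMSE T1 \<theta> b n k"
    and "a_n T n k * (\<theta> * a_n T n k + 2 * b (ln (real n / real k))) > 0
      \<Longrightarrow> AMSE T1 \<theta> b n k < AMSE T \<theta> b n k"
proof -
  have diff: "AMSE T \<theta> b n k - AMSE T1 \<theta> b n k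
      = \<theta> * (a_n T n k * (\<theta> * a_n T n k + 2 * b (ln (real n / real k))))"
    using AMSE_minus_AMSE_T1[OF assms(1)] by (simp only: mult.assoc)
  show "AMSE T \<theta> b n k < AMSE T1 \<theta> b n k"
    if "a_n T n k * (\<theta> * a_n T n k + 2 * b (ln (real n / real k))) < 0"
    using mult_pos_neg[OF assms(2) that] diff by linarith
  show "AMSE T1 \<theta> b n k < AMSE T \<theta> b n k"
    if "a_n T n k * (\<theta> * a_n T n k + 2 * b (ln (real n / real k))) > 0"
    using mult_pos_pos[OF assms(2) that] diff by linarith
qed

(* Part (i) of the theorem: b ultimately non-positive.  T3 (bias of the same sign as b) is
   always worse than T1; T2 beats T1 exactly when alpha > theta. *)
lemma comparison_b_nonpositive:
  fixes k :: "nat \<Rightarrow> nat" and \<theta> :: real and \<alpha> :: ereal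
  assumes \<theta>: "\<theta> > 0" and A2: "assm_A2 ell \<rho> b" and ell_pos: "\<forall>\<^sub>F z in at_top. ell z > 0"
    and k_range: "\<forall>n\<ge>2. 1 \<le> k n \<and> k n < n"
    and k_inf: "filterlim k at_top sequentially"
    and k_log: "(\<lambda>n. ln (real (k n)) / ln (real n)) \<longlonglongrightarrow> 0"
    and b_neg: "\<forall>\<^sub>F x in at_top. b x \<le> 0"
    and \<alpha>: "((\<lambda>n. ereal (- 4 * b (ln (real n)) * real (k n) / ln (real (k n)))) \<longlongrightarrow> \<alpha>) sequentially"
  shows "\<alpha> > ereal \<theta> \<Longrightarrow> \<forall>\<^sub>F n in sequentially.
      AMSE T2 \<theta> b n (k n) < AMSE T1 \<theta> b n (k n) \<and> AMSE T1 \<theta> b n (k n) < AMSE T3 \<theta> b n (k n)"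
    and "\<alpha> < ereal \<theta> \<Longrightarrow> \<forall>\<^sub>F n in sequentially.
      AMSE T1 \<theta> b n (k n) < min (AMSE T2 \<theta> b n (k n)) (AMSE T3 \<theta> b n (k n))"
proof -
  note signs = eventually_bias_signs[OF k_range k_inf k_log]
  note compare = AMSE_order_by_signs[OF _ \<theta>]
  note E2 = excess_T2_sign[OF A2 ell_pos k_range k_inf k_log \<alpha>, of \<theta>]
  have T3: "\<forall>\<^sub>F n in sequentially. AMSE T1 \<theta> b n (k n) < AMSE T3 \<theta> b n (k n)"
    using signs eventually_compose_filterlim[OF b_neg k_sequence_asymptotics(1)[OF k_range k_inf k_log]]
  proof eventually_elim
    case (elim n)
    then have "\<theta> * a_n T3 n (k n) + 2 * b (ln (real n / real (k n))) < 0"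
      using mult_pos_neg[OF \<theta>, of "a_n T3 n (k n)"] by linarith
    then show ?case using elim by (intro compare(2)) (auto simp: zero_less_mult_iff)
  qed
  show "\<forall>\<^sub>F n in sequentially.
      AMSE T2 \<theta> b n (k n) < AMSE T1 \<theta> b n (k n) \<and> AMSE T1 \<theta> b n (k n) < AMSE T3 \<theta> b n (k n)"
    if "\<alpha> > ereal \<theta>"
    using signs E2(1)[OF that] T3
    by eventually_elim (auto intro!: compare(1) simp: mult_less_0_iff)
  show "\<forall>\<^sub>F n in sequentially. AMSE T1 \<theta> b n (k n) < min (AMSE T2 \<theta> b n (k n)) (AMSE T3 \<theta> b n (k n))"
    if "\<alpha> < ereal \<theta>"
    using signs E2(2)[OF that] T3
    by eventually_elim (auto intro!: compare(2) simp: zero_less_mult_iff)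
qed

lemma comparison_b_nonnegative:
  fixes k :: "nat \<Rightarrow> nat" and \<theta> :: real and \<beta> :: ereal
  assumes \<theta>: "\<theta> > 0"
    and k_range: "\<forall>n\<ge>2. 1 \<le> k n \<and> k n < n"
    and k_inf: "filterlim k at_top sequentially"
    and k_log: "(\<lambda>n. ln (real (k n)) / ln (real n)) \<longlonglongrightarrow> 0"
    and b_pos: "\<forall>\<^sub>F x in at_top. b x \<ge> 0"
    and \<beta>: "((\<lambda>x. ereal (2 * x * b x)) \<longlongrightarrow> \<beta>) at_top"
  shows "\<beta> > ereal \<theta> \<Longrightarrow> \<forall>\<^sub>F n in sequentially.
      AMSE T3 \<theta> b n (k n) < AMSE T1 \<theta> b n (k n) \<and> AMSE T1 \<theta> b n (k n) < AMSE T2 \<theta> b n (k n)"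
    and "\<beta> < ereal \<theta> \<Longrightarrow> \<forall>\<^sub>F n in sequentially.
      AMSE T1 \<theta> b n (k n) < min (AMSE T2 \<theta> b n (k n)) (AMSE T3 \<theta> b n (k n))"
proof -
  note signs = eventually_bias_signs[OF k_range k_inf k_log]
  note compare = AMSE_order_by_signs[OF _ \<theta>]
  note E3 = excess_T3_sign[OF k_range k_inf k_log \<beta>, of \<theta>]
  have T2: "\<forall>\<^sub>F n in sequentially. AMSE T1 \<theta> b n (k n) < AMSE T2 \<theta> b n (k n)"
    using signs eventually_compose_filterlim[OF b_pos k_sequence_asymptotics(1)[OF k_range k_inf k_log]]
  proof eventually_elim
    case (elim n)
    then have "\<theta> * a_n T2 n (k n) + 2 * b (ln (real n / real (k n))) > 0"
      using mult_pos_pos[OF \<theta>, of "a_n T2 n (k n)"] by linarith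
    then show ?case using elim by (intro compare(2)) (auto simp: zero_less_mult_iff)
  qed
  show "\<forall>\<^sub>F n in sequentially.
      AMSE T3 \<theta> b n (k n) < AMSE T1 \<theta> b n (k n) \<and> AMSE T1 \<theta> b n (k n) < AMSE T2 \<theta> b n (k n)"
    if "\<beta> > ereal \<theta>"
    using signs E3(1)[OF that] T2
    by eventually_elim (auto intro!: compare(1) simp: mult_less_0_iff)
  show "\<forall>\<^sub>F n in sequentially. AMSE T1 \<theta> b n (k n) < min (AMSE T2 \<theta> b n (k n)) (AMSE T3 \<theta> b n (k n))"
    if "\<beta> < ereal \<theta>"
    using signs E3(2)[OF that] T2
    by eventually_elim (auto intro!: compare(2) simp: zero_less_mult_iff)
qed

theorem theorem3:
  fixes F H ell b :: "real \<Rightarrow> real" and \<theta> \<rho> x0 lam :: real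
    and k :: "nat \<Rightarrow> nat" and \<alpha> \<beta> :: ereal
  assumes cdf: "is_cdf F"
    and A1: "assm_A1 F \<theta> H x0 ell"
    and A2: "assm_A2 ell \<rho> b"
    and k_range: "\<forall>n\<ge>2. 1 \<le> k n \<and> k n < n"
    and k_inf: "filterlim k at_top sequentially"
    and k_log: "(\<lambda>n. ln (real (k n)) / ln (real n)) \<longlonglongrightarrow> 0"
    and k_bias: "(\<lambda>n. sqrt (real (k n)) * b (ln (real n / real (k n)))) \<longlonglongrightarrow> lam"
  shows "((\<forall>\<^sub>F x in at_top. b x \<le> 0)
          \<and> ((\<lambda>n. ereal (- 4 * b (ln (real n)) * real (k n) / ln (real (k n)))) \<longlongrightarrow> \<alpha>) sequentially
          \<longrightarrow> (\<alpha> > ereal \<theta> \<longrightarrow> (\<forall>\<^sub>F n in sequentially.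
                   AMSE T2 \<theta> b n (k n) < AMSE T1 \<theta> b n (k n)
                 \<and> AMSE T1 \<theta> b n (k n) < AMSE T3 \<theta> b n (k n)))
            \<and> (\<alpha> < ereal \<theta> \<longrightarrow> (\<forall>\<^sub>F n in sequentially.
                   AMSE T1 \<theta> b n (k n) < min (AMSE T2 \<theta> b n (k n)) (AMSE T3 \<theta> b n (k n)))))
       \<and> ((\<forall>\<^sub>F x in at_top. b x \<ge> 0)
          \<and> ((\<lambda>x. ereal (2 * x * b x)) \<longlongrightarrow> \<beta>) at_top
          \<longrightarrow> (\<beta> > ereal \<theta> \<longrightarrow> (\<forall>\<^sub>F n in sequentially.
                   AMSE T3 \<theta> b n (k n) < AMSE T1 \<theta> b n (k n)
                 \<and> AMSE T1 \<theta> b n (k n) < AMSE T2 \<theta> b n (k n)))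
            \<and> (\<beta> < ereal \<theta> \<longrightarrow> (\<forall>\<^sub>F n in sequentially.
                   AMSE T1 \<theta> b n (k n) < min (AMSE T2 \<theta> b n (k n)) (AMSE T3 \<theta> b n (k n)))))"
proof -
  have \<theta>: "\<theta> > 0" and ell_pos: "\<forall>\<^sub>F z in at_top. ell z > 0"
    using A1 unfolding assm_A1_def slowly_varying_def by auto
  show ?thesis
    using comparison_b_nonpositive[OF \<theta> A2 ell_pos k_range k_inf k_log]
      comparison_b_nonnegative[OF \<theta> k_range k_inf k_log]
    by blast
qed

end
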